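(* Let $\mathcal{F}=\langle\mathbb{A},(\mu_i)_{i\in\mathsf{Ag}}\rangle$ be an APE-structure and $\mathbb{E}=(E,(\sim_i),(P_i),\Phi,\mathsf{pre})$ a probabilistic event structure over $\mathbb{A}$. Then the updated structure $\mathcal{F}^{\mathbb{E}}=(\mathbb{A}^{\mathbb{E}},(\mu^{\mathbb{E}}_i)_{i\in\mathsf{Ag}})$ is an APE-structure.
   Context: Fix a set $\mathsf{Ag}$ of agents. A monadic Heyting algebra is a Heyting algebra $\mathbb{L}$ with, for each $i\in\mathsf{Ag}$, monotone unary operations $\lozenge_i,\Box_i$ such that for all $a,b$: $a\leq\lozenge_i a$; $\Box_i a\leq a$; $\lozenge_i(a\vee b)\leq\lozenge_i a\vee\lozenge_i b$; $\Box_i(a\to b)\leq\Box_i a\to\Box_i b$; $\lozenge_i a\leq\Box_i\lozenge_i a$; $\lozenge_i\Box_i a\leq\Box_i a$; $\Box_i(a\to b)\leq\lozenge_i a\to\lozenge_i b$; $\lozenge_i\bot\leq\bot$; $\top\leq\Box_i\top$. An epistemic Heyting algebra is a finite monadic Heyting algebra with $\lozenge_i a\vee\neg\lozenge_i a=\top$ for all $i,a$. An element $c$ is $i$-minimal if $c\neq\bot$, $\lozenge_i c=c$, and whenever $d<c$ and $\lozenge_i d=d$ then $d=\bot$; $\mathsf{Min}_i(\cdot)$ is the set of $i$-minimal elements. A partial map $\mu:\mathbb{A}\to\mathbb{R}^+$ is an $i$-premeasure if: $\mathsf{dom}(\mu)=\mathsf{Min}_i(\mathbb{A}){\downarrow}$;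 $\mu$ is order-preserving; for $a\in\mathsf{Min}_i(\mathbb{A})$ and $b,c\leq a$, $\mu(b\vee c)=\mu(b)+\mu(c)-\mu(b\wedge c)$; $\mu(\bot)=0$ if $\mathsf{dom}(\mu)\neq\varnothing$. It is an $i$-measure if also: for $a\in\mathsf{Min}_i(\mathbb{A})$ and $b<c\leq a$, $\mu(b)<\mu(c)$; and $\mu(a)=1$ for $a\in\mathsf{Min}_i(\mathbb{A})$. An APE-structure is $\langle\mathbb{A},(\mu_i)\rangle$ with $\mathbb{A}$ an epistemic Heyting algebra and each $\mu_i$ an $i$-measure on $\mathbb{A}$. A pre-ordered multiset on $X$ is a multiset in which the copies $x_1,\dots,x_n$ of an element carry the linear order $x_1\prec\cdots\prec x_n$. A probabilistic event structure over $\mathbb{A}$ is $(E,(\sim_i),(P_i),\Phi,\mathsf{pre})$: $E$ non-empty finite; $\sim_i$ equivalence relations on $E$; $P_i:E\to\,]0,1]$ with $\sum\{P_i(e')\mid e'\sim_i e\}=1$; $\Phi$ a finite pre-ordered multiset on $\mathbb{A}$ such that any $a,b\in\Phi$ arising from distinct elements satisfy $a\wedge b=\bot$ or $a<b$ or $b<a$; $\mathsf{pre}(\bullet\mid a)$ a probability distribution on $E$ for each $a\in\Phi$; and if $\mathsf{pre}(e\mid a)=0$ then $\mathsf{pre}(e\mid b)=0$ for $b\in\Phi$ with $a<b$ (distinct elements) or $a\prec b$ (copies). For $a\in\Phi$: $\mathrm{mb}(a)$ is the set of maximal elements of $\Phi\cap({\downarrow}a\setminus\{a\})$, and $\mu^a_i(x):=\mu_i(x\wedge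 a)-\sum_{b\in\mathrm{mb}(a)}\mu_i(x\wedge b)$ for $x\in\mathsf{Min}_i(\mathbb{A}){\downarrow}$. Intermediate algebra $\mathbb{A}'=\prod_{\mathbb{E}}\mathbb{A}$: all maps $f:E\to\mathbb{A}$ with pointwise Heyting operations, $(\lozenge'_i f)(e)=\bigvee\{\lozenge_i f(e')\mid e'\sim_i e\}$, $(\Box'_i f)(e)=\bigwedge\{\Box_i f(e')\mid e'\sim_i e\}$; and $\mu'_i:\mathsf{Min}_i(\mathbb{A}'){\downarrow}\to\mathbb{R}^+$, $\mu'_i(f)=\sum_{e\in E}\sum_{a\in\Phi}P_i(e)\mu^a_i(f(e))\mathsf{pre}(e\mid a)$. Define $\overline{\mathsf{pre}}\in\mathbb{A}'$ by $\overline{\mathsf{pre}}(e)=\bigvee\{a\in\Phi\mid\mathsf{pre}(e\mid a)\neq0\}$. For an epistemic Heyting algebra $\mathbb{B}$ and $c\in\mathbb{B}$, the pseudo-quotient $\mathbb{B}^c$ has carrier the quotient Heyting algebra by $x\cong_c y\iff x\wedge c=y\wedge c$ (classes $[x]$, $[x]\leq[y]$ iff $x\wedge c\leq y\wedge c$), with $\lozenge^c_i[x]=[\lozenge_i(x\wedge c)]$ and $\Box^c_i[x]=[\Box_i(c\to x)]$. Set $\mathbb{A}^{\mathbb{E}}:=(\mathbb{A}')^{\overline{\mathsf{pre}}}$. The updated structure is $\mathcal{F}^{\mathbb{E}}=(\mathbb{A}^{\mathbb{E}},(\mu^{\mathbb{E}}_i))$ with $\mu^{\mathbb{E}}_i:\mathsf{Min}_i(\mathbb{A}^{\mathbb{E}}){\downarrow}\to[0,1]$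 given by $\mu^{\mathbb{E}}_i([g])=0$ if $[g]=\bot$ and otherwise $\mu^{\mathbb{E}}_i([g])=\mu'_i(g)/\mu'_i(f)$, where $[f]$ is the only element of $\mathsf{Min}_i(\mathbb{A}^{\mathbb{E}})$ with $[g]\leq[f]$. *)

theory Defs
  imports Complex_Main "HOL-Library.FuncSet"
begin

record ('a, 'i) mha =
  hcar  :: "'a set"
  hle   :: "'a \<Rightarrow> 'a \<Rightarrow> bool"
  hmeet :: "'a \<Rightarrow> 'a \<Rightarrow> 'a"
  hjoin :: "'a \<Rightarrow> 'a \<Rightarrow> 'a"
  himp  :: "'a \<Rightarrow> 'a \<Rightarrow> 'a"
  hbot  :: "'a"
  htop  :: "'a"
  hdia  :: "'i \<Rightarrow> 'a \<Rightarrow> 'a"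
  hbox  :: "'i \<Rightarrow> 'a \<Rightarrow> 'a"

definition hlt :: "('a,'i) mha \<Rightarrow> 'a \<Rightarrow> 'a \<Rightarrow> bool" where
  "hlt A x y \<longleftrightarrow> hle A x y \<and> x \<noteq> y"

definition hneg :: "('a,'i) mha \<Rightarrow> 'a \<Rightarrow> 'a" where
  "hneg A x = himp A x (hbot A)"

definition heyting_algebra :: "('a,'i) mha \<Rightarrow> bool" where
  "heyting_algebra A \<longleftrightarrow>
     (\<forall>x\<in>hcar A. hle A x x) \<and>
     (\<forall>x\<in>hcar A. \<forall>y\<in>hcar A. hle A x y \<and> hle A y x \<longrightarrow> x = y) \<and>
     (\<forall>x\<in>hcar A. \<forall>y\<in>hcar A. \<forall>z\<in>hcar A. hle A x y \<and> hle A y z \<longrightarrow> hle A x z) \<and>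
     hbot A \<in> hcar A \<and> htop A \<in> hcar A \<and>
     (\<forall>x\<in>hcar A. hle A (hbot A) x \<and> hle A x (htop A)) \<and>
     (\<forall>x\<in>hcar A. \<forall>y\<in>hcar A.
        hmeet A x y \<in> hcar A \<and> hle A (hmeet A x y) x \<and> hle A (hmeet A x y) y \<and>
        (\<forall>z\<in>hcar A. hle A z x \<and> hle A z y \<longrightarrow> hle A z (hmeet A x y))) \<and>
     (\<forall>x\<in>hcar A. \<forall>y\<in>hcar A.
        hjoin A x y \<in> hcar A \<and> hle A x (hjoin A x y) \<and> hle A y (hjoin A x y) \<and>
        (\<forall>z\<in>hcar A. hle A x z \<and> hle A y z \<longrightarrow> hle A (hjoin A x y) z)) \<and>
     (\<forall>x\<in>hcar A. \<forall>y\<in>hcar A. himp A x y \<in> hcar A \<and>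
        (\<forall>z\<in>hcar A. hle A (hmeet A z x) y \<longleftrightarrow> hle A z (himp A x y)))"

definition monadic_heyting_algebra :: "('a,'i) mha \<Rightarrow> bool" where
  "monadic_heyting_algebra A \<longleftrightarrow> heyting_algebra A \<and>
     (\<forall>i. \<forall>a\<in>hcar A. hdia A i a \<in> hcar A \<and> hbox A i a \<in> hcar A) \<and>
     (\<forall>i. \<forall>a\<in>hcar A. \<forall>b\<in>hcar A. hle A a b \<longrightarrow>
         hle A (hdia A i a) (hdia A i b) \<and> hle A (hbox A i a) (hbox A i b)) \<and>
     (\<forall>i. \<forall>a\<in>hcar A. \<forall>b\<in>hcar A.
        hle A a (hdia A i a) \<and>
        hle A (hbox A i a) a \<and>
        hle A (hdia A i (hjoin A a b)) (hjoin A (hdia A i a) (hdia A i b)) \<and>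
        hle A (hbox A i (himp A a b)) (himp A (hbox A i a) (hbox A i b)) \<and>
        hle A (hdia A i a) (hbox A i (hdia A i a)) \<and>
        hle A (hdia A i (hbox A i a)) (hbox A i a) \<and>
        hle A (hbox A i (himp A a b)) (himp A (hdia A i a) (hdia A i b))) \<and>
     (\<forall>i. hle A (hdia A i (hbot A)) (hbot A) \<and> hle A (htop A) (hbox A i (htop A)))"

definition epistemic_heyting_algebra :: "('a,'i) mha \<Rightarrow> bool" where
  "epistemic_heyting_algebra A \<longleftrightarrow> monadic_heyting_algebra A \<and> finite (hcar A) \<and>
     (\<forall>i. \<forall>a\<in>hcar A. hjoin A (hdia A i a) (hneg A (hdia A i a)) = htop A)"

definition i_minimal :: "('a,'i) mha \<Rightarrow> 'i \<Rightarrow> 'a \<Rightarrow> bool" where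
  "i_minimal A i c \<longleftrightarrow> c \<in> hcar A \<and> c \<noteq> hbot A \<and> hdia A i c = c \<and>
     (\<forall>d\<in>hcar A. hlt A d c \<and> hdia A i d = d \<longrightarrow> d = hbot A)"

definition Min_i :: "('a,'i) mha \<Rightarrow> 'i \<Rightarrow> 'a set" where
  "Min_i A i = {c. i_minimal A i c}"

definition Min_down :: "('a,'i) mha \<Rightarrow> 'i \<Rightarrow> 'a set" where
  "Min_down A i = {x \<in> hcar A. \<exists>c\<in>Min_i A i. hle A x c}"

text \<open>Partial maps into the non-negative reals are rendered as 'a => real option.\<close>

definition i_premeasure :: "('a,'i) mha \<Rightarrow> 'i \<Rightarrow> ('a \<Rightarrow> real option) \<Rightarrow> bool" where
  "i_premeasure A i \<mu> \<longleftrightarrow>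
     dom \<mu> = Min_down A i \<and>
     (\<forall>x\<in>dom \<mu>. 0 \<le> the (\<mu> x)) \<and>
     (\<forall>x\<in>dom \<mu>. \<forall>y\<in>dom \<mu>. hle A x y \<longrightarrow> the (\<mu> x) \<le> the (\<mu> y)) \<and>
     (\<forall>a\<in>Min_i A i. \<forall>b\<in>hcar A. \<forall>c\<in>hcar A. hle A b a \<and> hle A c a \<longrightarrow>
        the (\<mu> (hjoin A b c)) = the (\<mu> b) + the (\<mu> c) - the (\<mu> (hmeet A b c))) \<and>
     (dom \<mu> \<noteq> {} \<longrightarrow> \<mu> (hbot A) = Some 0)"

definition i_measure :: "('a,'i) mha \<Rightarrow> 'i \<Rightarrow> ('a \<Rightarrow> real option) \<Rightarrow> bool" where
  "i_measure A i \<mu> \<longleftrightarrow> i_premeasure A i \<mu> \<and>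
     (\<forall>a\<in>Min_i A i. \<forall>b\<in>hcar A. \<forall>c\<in>hcar A. hlt A b c \<and> hle A c a \<longrightarrow>
        the (\<mu> b) < the (\<mu> c)) \<and>
     (\<forall>a\<in>Min_i A i. \<mu> a = Some 1)"

definition APE_structure :: "('a,'i) mha \<Rightarrow> ('i \<Rightarrow> 'a \<Rightarrow> real option) \<Rightarrow> bool" where
  "APE_structure A \<mu> \<longleftrightarrow> epistemic_heyting_algebra A \<and> (\<forall>i. i_measure A i (\<mu> i))"

text \<open>The pre-ordered multiset \<Phi> on the algebra is a finite set of pairs (a, k):
  the copies of an element a are (a,0), (a,1), ..., (a,n-1), ordered by their
  index.\<close>

definition phi_less :: "('a,'i) mha \<Rightarrow> ('a \<times> nat) \<Rightarrow> ('a \<times> nat) \<Rightarrow> bool" where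
  "phi_less A p q \<longleftrightarrow> hlt A (fst p) (fst q) \<or> (fst p = fst q \<and> snd p < snd q)"

definition prob_event_structure ::
  "('a,'i) mha \<Rightarrow> 'e set \<Rightarrow> ('i \<Rightarrow> 'e \<Rightarrow> 'e \<Rightarrow> bool) \<Rightarrow> ('i \<Rightarrow> 'e \<Rightarrow> real)
   \<Rightarrow> ('a \<times> nat) set \<Rightarrow> ('e \<Rightarrow> ('a \<times> nat) \<Rightarrow> real) \<Rightarrow> bool" where
  "prob_event_structure A E sim P \<Phi> pre \<longleftrightarrow>
     finite E \<and> E \<noteq> {} \<and>
     (\<forall>i. (\<forall>e\<in>E. sim i e e) \<and> (\<forall>e\<in>E. \<forall>e'\<in>E. sim i e e' \<longrightarrow> sim i e' e) \<and>
          (\<forall>e\<in>E. \<forall>e'\<in>E. \<forall>e''\<in>E. sim i e e' \<and> sim i e' e'' \<longrightarrow> sim i e e'')) \<and>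
     (\<forall>i. \<forall>e\<in>E. 0 < P i e \<and> P i e \<le> 1) \<and>
     (\<forall>i. \<forall>e\<in>E. (\<Sum>e'\<in>{e'\<in>E. sim i e' e}. P i e') = 1) \<and>
     finite \<Phi> \<and>
     (\<forall>p\<in>\<Phi>. fst p \<in> hcar A \<and> (\<forall>m < snd p. (fst p, m) \<in> \<Phi>)) \<and>
     (\<forall>p\<in>\<Phi>. \<forall>q\<in>\<Phi>. fst p \<noteq> fst q \<longrightarrow>
        hmeet A (fst p) (fst q) = hbot A \<or> hlt A (fst p) (fst q) \<or> hlt A (fst q) (fst p)) \<and>
     (\<forall>p\<in>\<Phi>. (\<forall>e\<in>E. 0 \<le> pre e p) \<and> (\<Sum>e\<in>E. pre e p) = 1) \<and>
     (\<forall>p\<in>\<Phi>. \<forall>q\<in>\<Phi>. phi_less A p q \<longrightarrow> (\<forall>e\<in>E. pre e p = 0 \<longrightarrow> pre e q = 0))"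

definition mb :: "('a,'i) mha \<Rightarrow> ('a \<times> nat) set \<Rightarrow> ('a \<times> nat) \<Rightarrow> ('a \<times> nat) set" where
  "mb A \<Phi> p = {q\<in>\<Phi>. phi_less A q p \<and> \<not> (\<exists>r\<in>\<Phi>. phi_less A r p \<and> phi_less A q r)}"

definition mu_a :: "('a,'i) mha \<Rightarrow> ('a \<Rightarrow> real option) \<Rightarrow> ('a \<times> nat) set \<Rightarrow> ('a \<times> nat) \<Rightarrow> 'a \<Rightarrow> real" where
  "mu_a A \<mu> \<Phi> p x = the (\<mu> (hmeet A x (fst p))) - (\<Sum>q\<in>mb A \<Phi> p. the (\<mu> (hmeet A x (fst q))))"

definition bigjoin :: "('a,'i) mha \<Rightarrow> 'a set \<Rightarrow> 'a" where
  "bigjoin A S = (THE x. x \<in> hcar A \<and> (\<forall>s\<in>S. hle A s x) \<and>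
                          (\<forall>y\<in>hcar A. (\<forall>s\<in>S. hle A s y) \<longrightarrow> hle A x y))"

definition bigmeet :: "('a,'i) mha \<Rightarrow> 'a set \<Rightarrow> 'a" where
  "bigmeet A S = (THE x. x \<in> hcar A \<and> (\<forall>s\<in>S. hle A x s) \<and>
                          (\<forall>y\<in>hcar A. (\<forall>s\<in>S. hle A y s) \<longrightarrow> hle A y x))"

text \<open>Maps E -> A are represented as extensional functions (undefined outside E).\<close>
definition inter_alg :: "('a,'i) mha \<Rightarrow> 'e set \<Rightarrow> ('i \<Rightarrow> 'e \<Rightarrow> 'e \<Rightarrow> bool) \<Rightarrow> ('e \<Rightarrow> 'a, 'i) mha" where
  "inter_alg A E sim = \<lparr>
     hcar = PiE E (\<lambda>_. hcar A),
     hle = (\<lambda>f g. \<forall>e\<in>E. hle A (f e) (g e)),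
     hmeet = (\<lambda>f g. restrict (\<lambda>e. hmeet A (f e) (g e)) E),
     hjoin = (\<lambda>f g. restrict (\<lambda>e. hjoin A (f e) (g e)) E),
     himp = (\<lambda>f g. restrict (\<lambda>e. himp A (f e) (g e)) E),
     hbot = restrict (\<lambda>e. hbot A) E,
     htop = restrict (\<lambda>e. htop A) E,
     hdia = (\<lambda>i f. restrict (\<lambda>e. bigjoin A {hdia A i (f e') | e'. e' \<in> E \<and> sim i e' e}) E),
     hbox = (\<lambda>i f. restrict (\<lambda>e. bigmeet A {hbox A i (f e') | e'. e' \<in> E \<and> sim i e' e}) E) \<rparr>"

definition mu_inter ::
  "('a,'i) mha \<Rightarrow> ('i \<Rightarrow> 'a \<Rightarrow> real option) \<Rightarrow> 'e set \<Rightarrow> ('i \<Rightarrow> 'e \<Rightarrow> 'e \<Rightarrow> bool) \<Rightarrow> ('i \<Rightarrow> 'e \<Rightarrow> real)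
   \<Rightarrow> ('a \<times> nat) set \<Rightarrow> ('e \<Rightarrow> ('a \<times> nat) \<Rightarrow> real) \<Rightarrow> 'i \<Rightarrow> ('e \<Rightarrow> 'a) \<Rightarrow> real option" where
  "mu_inter A \<mu> E sim P \<Phi> pre i f =
     (if f \<in> Min_down (inter_alg A E sim) i
      then Some (\<Sum>e\<in>E. \<Sum>p\<in>\<Phi>. P i e * mu_a A (\<mu> i) \<Phi> p (f e) * pre e p)
      else None)"

definition pq_cls :: "('b,'i) mha \<Rightarrow> 'b \<Rightarrow> 'b \<Rightarrow> 'b set" where
  "pq_cls B c x = {y \<in> hcar B. hmeet B y c = hmeet B x c}"

definition pq_rep :: "'b set \<Rightarrow> 'b" where
  "pq_rep X = (SOME x. x \<in> X)"

definition pquot :: "('b,'i) mha \<Rightarrow> 'b \<Rightarrow> ('b set, 'i) mha" where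
  "pquot B c = \<lparr>
     hcar = pq_cls B c ` hcar B,
     hle = (\<lambda>X Y. hle B (hmeet B (pq_rep X) c) (hmeet B (pq_rep Y) c)),
     hmeet = (\<lambda>X Y. pq_cls B c (hmeet B (pq_rep X) (pq_rep Y))),
     hjoin = (\<lambda>X Y. pq_cls B c (hjoin B (pq_rep X) (pq_rep Y))),
     himp = (\<lambda>X Y. pq_cls B c (himp B (pq_rep X) (pq_rep Y))),
     hbot = pq_cls B c (hbot B),
     htop = pq_cls B c (htop B),
     hdia = (\<lambda>i X. pq_cls B c (hdia B i (hmeet B (pq_rep X) c))),
     hbox = (\<lambda>i X. pq_cls B c (hbox B i (himp B c (pq_rep X)))) \<rparr>"

definition prebar :: "('a,'i) mha \<Rightarrow> 'e set \<Rightarrow> ('a \<times> nat) set \<Rightarrow> ('e \<Rightarrow> ('a \<times> nat) \<Rightarrow> real) \<Rightarrow> 'e \<Rightarrow> 'a" where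
  "prebar A E \<Phi> pre = restrict (\<lambda>e. bigjoin A {fst p | p. p \<in> \<Phi> \<and> pre e p \<noteq> 0}) E"

definition upd_alg ::
  "('a,'i) mha \<Rightarrow> 'e set \<Rightarrow> ('i \<Rightarrow> 'e \<Rightarrow> 'e \<Rightarrow> bool) \<Rightarrow> ('a \<times> nat) set
   \<Rightarrow> ('e \<Rightarrow> ('a \<times> nat) \<Rightarrow> real) \<Rightarrow> (('e \<Rightarrow> 'a) set, 'i) mha" where
  "upd_alg A E sim \<Phi> pre = pquot (inter_alg A E sim) (prebar A E \<Phi> pre)"

text \<open>mu^E([g]) = mu'(g) / mu'(f), where g is a representative of the class lying in
  the domain of mu', and [f] is the unique i-minimal class above [g] (again with f a
  representative in the domain of mu').\<close>
definition upd_mu ::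
  "('a,'i) mha \<Rightarrow> ('i \<Rightarrow> 'a \<Rightarrow> real option) \<Rightarrow> 'e set \<Rightarrow> ('i \<Rightarrow> 'e \<Rightarrow> 'e \<Rightarrow> bool) \<Rightarrow> ('i \<Rightarrow> 'e \<Rightarrow> real)
   \<Rightarrow> ('a \<times> nat) set \<Rightarrow> ('e \<Rightarrow> ('a \<times> nat) \<Rightarrow> real) \<Rightarrow> 'i \<Rightarrow> ('e \<Rightarrow> 'a) set \<Rightarrow> real option" where
  "upd_mu A \<mu> E sim P \<Phi> pre i X =
     (let AE = upd_alg A E sim \<Phi> pre;
          m' = mu_inter A \<mu> E sim P \<Phi> pre i
      in if X \<in> Min_down AE i then
           (if X = hbot AE then Some 0
            else (let F = (THE F. F \<in> Min_i AE i \<and> hle AE X F);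
                      g = (SOME g. g \<in> X \<and> g \<in> dom m');
                      f = (SOME f. f \<in> F \<and> f \<in> dom m')
                  in Some (the (m' g) / the (m' f))))
         else None)"

end

theory Submission
  imports Defs
begin

text \<open>The updated algebra is the pseudo-quotient of the product \<open>A' = A\<^sup>E\<close>, whose \<open>\<diamond>'\<^sub>i\<close> joins
  \<open>\<diamond>\<^sub>i\<close>-values over \<open>\<sim>\<^sub>i\<close>-classes, by the element \<open>pbar\<close> joining, at each event, the
  preconditions of positive probability. Both constructions preserve epistemic Heyting algebras:
  the product pointwise, the pseudo-quotient by computing every operation on the canonical
  representative \<open>x \<^bold>\<sqinter> c\<close> of a class.

  For the measures, an \<open>i\<close>-minimal class of the quotient lifts to an \<open>i\<close>-minimal \<open>H\<close> of \<open>A'\<close>,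
  and such an \<open>H\<close> lives on a single \<open>\<sim>\<^sub>i\<close>-class with an \<open>i\<close>-minimal value of \<open>A\<close>. Below it
  each weight \<open>\<mu>\<^sup>a\<^sub>i\<close> is monotone and modular, hence so is \<open>\<mu>'\<^sub>i\<close>. Moreover \<open>\<mu>'\<^sub>i\<close> is invariant
  under meeting with \<open>pbar\<close>, so it is well defined on classes, and it is strictly monotone below
  \<open>pbar\<close>: distinct canonical representatives differ on a precondition of positive weight, and
  the weight of a minimal such precondition separates them. Normalising by the value of the
  minimal class yields an \<open>i\<close>-measure.\<close>

section \<open>Heyting algebras on a carrier\<close>

locale heyting =
  fixes A :: "('a, 'i) mha"
  assumes heyting: "heyting_algebra A"
begin

abbreviation carrier :: "'a set" where "carrier \<equiv> hcar A"
abbreviation le :: "'a \<Rightarrow> 'a \<Rightarrow> bool" (infix "\<preceq>" 50) where "le \<equiv> hle A"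
abbreviation less :: "'a \<Rightarrow> 'a \<Rightarrow> bool" (infix "\<prec>" 50) where "less \<equiv> hlt A"
abbreviation meet :: "'a \<Rightarrow> 'a \<Rightarrow> 'a" (infixl "\<^bold>\<sqinter>" 70) where "meet \<equiv> hmeet A"
abbreviation join :: "'a \<Rightarrow> 'a \<Rightarrow> 'a" (infixl "\<^bold>\<squnion>" 65) where "join \<equiv> hjoin A"
abbreviation imp :: "'a \<Rightarrow> 'a \<Rightarrow> 'a" (infixr "\<^bold>\<rightarrow>" 60) where "imp \<equiv> himp A"
abbreviation bottom :: 'a ("\<^bold>\<bottom>") where "bottom \<equiv> hbot A"
abbreviation top_elem :: 'a ("\<^bold>\<top>") where "top_elem \<equiv> htop A"

lemma le_refl [simp]: "x \<in> carrier \<Longrightarrow> x \<preceq> x"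
  and le_antisym: "x \<in> carrier \<Longrightarrow> y \<in> carrier \<Longrightarrow> x \<preceq> y \<Longrightarrow> y \<preceq> x \<Longrightarrow> x = y"
  and le_trans: "x \<preceq> y \<Longrightarrow> y \<preceq> z \<Longrightarrow> x \<in> carrier \<Longrightarrow> y \<in> carrier \<Longrightarrow> z \<in> carrier \<Longrightarrow> x \<preceq> z"
  and bottom_closed [simp]: "\<^bold>\<bottom> \<in> carrier"
  and top_closed [simp]: "\<^bold>\<top> \<in> carrier"
  and bottom_least [simp]: "x \<in> carrier \<Longrightarrow> \<^bold>\<bottom> \<preceq> x"
  and top_greatest [simp]: "x \<in> carrier \<Longrightarrow> x \<preceq> \<^bold>\<top>"
  and meet_closed [simp]: "x \<in> carrier \<Longrightarrow> y \<in> carrier \<Longrightarrow> x \<^bold>\<sqinter> y \<in> carrier"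
  and join_closed [simp]: "x \<in> carrier \<Longrightarrow> y \<in> carrier \<Longrightarrow> x \<^bold>\<squnion> y \<in> carrier"
  and imp_closed [simp]: "x \<in> carrier \<Longrightarrow> y \<in> carrier \<Longrightarrow> x \<^bold>\<rightarrow> y \<in> carrier"
  and meet_le1 [simp]: "x \<in> carrier \<Longrightarrow> y \<in> carrier \<Longrightarrow> x \<^bold>\<sqinter> y \<preceq> x"
  and meet_le2 [simp]: "x \<in> carrier \<Longrightarrow> y \<in> carrier \<Longrightarrow> x \<^bold>\<sqinter> y \<preceq> y"
  and join_ge1 [simp]: "x \<in> carrier \<Longrightarrow> y \<in> carrier \<Longrightarrow> x \<preceq> x \<^bold>\<squnion> y"
  and join_ge2 [simp]: "x \<in> carrier \<Longrightarrow> y \<in> carrier \<Longrightarrow> y \<preceq> x \<^bold>\<squnion> y"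
  and le_imp_iff: "x \<in> carrier \<Longrightarrow> y \<in> carrier \<Longrightarrow> z \<in> carrier \<Longrightarrow> z \<preceq> x \<^bold>\<rightarrow> y \<longleftrightarrow> z \<^bold>\<sqinter> x \<preceq> y"
  using heyting unfolding heyting_algebra_def by (elim conjE; metis)+

lemma le_meet_iff [simp]:
  "x \<in> carrier \<Longrightarrow> y \<in> carrier \<Longrightarrow> z \<in> carrier \<Longrightarrow> z \<preceq> x \<^bold>\<sqinter> y \<longleftrightarrow> z \<preceq> x \<and> z \<preceq> y"
  using heyting le_trans[of z "x \<^bold>\<sqinter> y"] unfolding heyting_algebra_def
  by (elim conjE) (meson meet_closed meet_le1 meet_le2)

lemma join_le_iff [simp]:
  "x \<in> carrier \<Longrightarrow> y \<in> carrier \<Longrightarrow> z \<in> carrier \<Longrightarrow> x \<^bold>\<squnion> y \<preceq> z \<longleftrightarrow> x \<preceq> z \<and> y \<preceq> z"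
  using heyting le_trans[of _ "x \<^bold>\<squnion> y" z] unfolding heyting_algebra_def
  by (elim conjE) (meson join_closed join_ge1 join_ge2)

lemma le_bottom_iff: "x \<in> carrier \<Longrightarrow> x \<preceq> \<^bold>\<bottom> \<longleftrightarrow> x = \<^bold>\<bottom>"
  using le_antisym by auto

lemma meet_le1I: "x \<preceq> z \<Longrightarrow> x \<in> carrier \<Longrightarrow> y \<in> carrier \<Longrightarrow> z \<in> carrier \<Longrightarrow> x \<^bold>\<sqinter> y \<preceq> z"
  and meet_le2I: "y \<preceq> z \<Longrightarrow> x \<in> carrier \<Longrightarrow> y \<in> carrier \<Longrightarrow> z \<in> carrier \<Longrightarrow> x \<^bold>\<sqinter> y \<preceq> z"
  using le_trans[of "x \<^bold>\<sqinter> y" x z] le_trans[of "x \<^bold>\<sqinter> y" y z] by simp_all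

lemma meet_mono:
  "x \<preceq> x' \<Longrightarrow> y \<preceq> y' \<Longrightarrow> x \<in> carrier \<Longrightarrow> y \<in> carrier \<Longrightarrow> x' \<in> carrier \<Longrightarrow> y' \<in> carrier
   \<Longrightarrow> x \<^bold>\<sqinter> y \<preceq> x' \<^bold>\<sqinter> y'"
  by (auto intro: meet_le1I meet_le2I)

lemma join_mono:
  "x \<preceq> x' \<Longrightarrow> y \<preceq> y' \<Longrightarrow> x \<in> carrier \<Longrightarrow> y \<in> carrier \<Longrightarrow> x' \<in> carrier \<Longrightarrow> y' \<in> carrier
   \<Longrightarrow> x \<^bold>\<squnion> y \<preceq> x' \<^bold>\<squnion> y'"
  using le_trans[of x x' "x' \<^bold>\<squnion> y'"] le_trans[of y y' "x' \<^bold>\<squnion> y'"] by simp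

lemma meet_comm: "x \<in> carrier \<Longrightarrow> y \<in> carrier \<Longrightarrow> x \<^bold>\<sqinter> y = y \<^bold>\<sqinter> x"
  by (rule le_antisym) auto

lemma meet_absorb1: "x \<preceq> y \<Longrightarrow> x \<in> carrier \<Longrightarrow> y \<in> carrier \<Longrightarrow> x \<^bold>\<sqinter> y = x"
  by (rule le_antisym) auto

lemma meet_bottom [simp]: "x \<in> carrier \<Longrightarrow> x \<^bold>\<sqinter> \<^bold>\<bottom> = \<^bold>\<bottom>" "x \<in> carrier \<Longrightarrow> \<^bold>\<bottom> \<^bold>\<sqinter> x = \<^bold>\<bottom>"
  and meet_top [simp]: "x \<in> carrier \<Longrightarrow> x \<^bold>\<sqinter> \<^bold>\<top> = x" "x \<in> carrier \<Longrightarrow> \<^bold>\<top> \<^bold>\<sqinter> x = x"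
  by (rule le_antisym; simp)+

lemma meet_meet_distrib:
  "x \<in> carrier \<Longrightarrow> y \<in> carrier \<Longrightarrow> z \<in> carrier \<Longrightarrow> x \<^bold>\<sqinter> y \<^bold>\<sqinter> z = (x \<^bold>\<sqinter> z) \<^bold>\<sqinter> (y \<^bold>\<sqinter> z)"
  by (rule le_antisym) (auto intro: meet_le1I meet_le2I)

lemma imp_mp: "x \<in> carrier \<Longrightarrow> y \<in> carrier \<Longrightarrow> (x \<^bold>\<rightarrow> y) \<^bold>\<sqinter> x \<preceq> y"
  using le_imp_iff[of x y "x \<^bold>\<rightarrow> y"] by simp

text \<open>Meets distribute over joins because \<open>_ \<^bold>\<sqinter> x\<close> has the right adjoint \<open>x \<^bold>\<rightarrow> _\<close>.\<close>

lemma meet_join_distrib: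
  assumes "x \<in> carrier" "y \<in> carrier" "z \<in> carrier"
  shows "x \<^bold>\<sqinter> (y \<^bold>\<squnion> z) = (x \<^bold>\<sqinter> y) \<^bold>\<squnion> (x \<^bold>\<sqinter> z)"
proof (rule le_antisym)
  let ?r = "(x \<^bold>\<sqinter> y) \<^bold>\<squnion> (x \<^bold>\<sqinter> z)"
  have "y \<^bold>\<sqinter> x \<preceq> ?r" "z \<^bold>\<sqinter> x \<preceq> ?r"
    using assms meet_comm[of x y] meet_comm[of x z] by simp_all
  then have "y \<preceq> x \<^bold>\<rightarrow> ?r" "z \<preceq> x \<^bold>\<rightarrow> ?r"
    using assms by (simp_all add: le_imp_iff)
  then have "(y \<^bold>\<squnion> z) \<^bold>\<sqinter> x \<preceq> ?r"
    using assms by (simp flip: le_imp_iff)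
  then show "x \<^bold>\<sqinter> (y \<^bold>\<squnion> z) \<preceq> ?r"
    using assms meet_comm[of x "y \<^bold>\<squnion> z"] by simp
  show "?r \<preceq> x \<^bold>\<sqinter> (y \<^bold>\<squnion> z)"
    using assms le_trans[of _ y "y \<^bold>\<squnion> z"] le_trans[of _ z "y \<^bold>\<squnion> z"] by (simp add: meet_le2I)
qed (use assms in simp_all)

lemma join_meet_distrib:
  "x \<in> carrier \<Longrightarrow> y \<in> carrier \<Longrightarrow> z \<in> carrier \<Longrightarrow> (y \<^bold>\<squnion> z) \<^bold>\<sqinter> x = (y \<^bold>\<sqinter> x) \<^bold>\<squnion> (z \<^bold>\<sqinter> x)"
  using meet_join_distrib meet_comm by simp

lemma imp_mono2: "y \<preceq> y' \<Longrightarrow> x \<in> carrier \<Longrightarrow> y \<in> carrier \<Longrightarrow> y' \<in> carrier \<Longrightarrow> x \<^bold>\<rightarrow> y \<preceq> x \<^bold>\<rightarrow> y'"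
  using le_imp_iff imp_mp le_trans by (meson imp_closed meet_closed)

lemma imp_self: "x \<in> carrier \<Longrightarrow> x \<^bold>\<rightarrow> x = \<^bold>\<top>"
  by (rule le_antisym) (auto simp: le_imp_iff)

lemma le_neg_iff: "x \<in> carrier \<Longrightarrow> z \<in> carrier \<Longrightarrow> z \<preceq> x \<^bold>\<rightarrow> \<^bold>\<bottom> \<longleftrightarrow> z \<^bold>\<sqinter> x = \<^bold>\<bottom>"
  using le_imp_iff le_bottom_iff by simp

lemma imp_cong_meet:
  assumes "c \<in> carrier" "u \<in> carrier" "v \<in> carrier" "c \<^bold>\<sqinter> u = c \<^bold>\<sqinter> v"
  shows "c \<^bold>\<rightarrow> u = c \<^bold>\<rightarrow> v"
proof -
  have "z \<preceq> c \<^bold>\<rightarrow> u \<longleftrightarrow> z \<preceq> c \<^bold>\<rightarrow> v" if "z \<in> carrier" for z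
  proof -
    have "z \<^bold>\<sqinter> c \<preceq> u \<longleftrightarrow> z \<^bold>\<sqinter> c \<preceq> c \<^bold>\<sqinter> u" using assms(1-3) that by simp
    also have "\<dots> \<longleftrightarrow> z \<^bold>\<sqinter> c \<preceq> c \<^bold>\<sqinter> v" by (simp only: assms(4))
    also have "\<dots> \<longleftrightarrow> z \<^bold>\<sqinter> c \<preceq> v" using assms(1-3) that by simp
    finally show ?thesis
      by (simp only: le_imp_iff[OF assms(1,2) that] le_imp_iff[OF assms(1,3) that])
  qed
  then show ?thesis using assms by (meson le_antisym imp_closed le_refl)
qed

lemma imp_imp_le:
  assumes abc: "a \<in> carrier" "b \<in> carrier" "c \<in> carrier"
  shows "c \<^bold>\<rightarrow> a \<^bold>\<rightarrow> b \<preceq> (c \<^bold>\<rightarrow> a) \<^bold>\<rightarrow> c \<^bold>\<rightarrow> b"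
proof -
  let ?z = "c \<^bold>\<rightarrow> a \<^bold>\<rightarrow> b"
  let ?w = "?z \<^bold>\<sqinter> (c \<^bold>\<rightarrow> a) \<^bold>\<sqinter> c"
  have w1: "?w \<preceq> ?z \<^bold>\<sqinter> c" and w2: "?w \<preceq> (c \<^bold>\<rightarrow> a) \<^bold>\<sqinter> c"
    using abc by (auto intro: meet_le1I meet_le2I)
  have "?w \<preceq> a \<^bold>\<rightarrow> b" "?w \<preceq> a"
    using le_trans[OF w1 imp_mp[of c "a \<^bold>\<rightarrow> b"]] le_trans[OF w2 imp_mp[of c a]] abc by simp_all
  then have "?w \<preceq> (a \<^bold>\<rightarrow> b) \<^bold>\<sqinter> a"
    using abc by simp
  then have "?w \<preceq> b"
    using le_trans[OF _ imp_mp[of a b]] abc by simp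
  then show ?thesis
    using abc le_imp_iff by simp
qed

lemma imp_meet_right:
  assumes "a \<in> carrier" "b \<in> carrier" "c \<in> carrier"
  shows "(a \<^bold>\<rightarrow> b) \<^bold>\<sqinter> c = (a \<^bold>\<sqinter> c \<^bold>\<rightarrow> b \<^bold>\<sqinter> c) \<^bold>\<sqinter> c"
proof (rule le_antisym)
  let ?w = "(a \<^bold>\<rightarrow> b) \<^bold>\<sqinter> c \<^bold>\<sqinter> (a \<^bold>\<sqinter> c)"
  have "?w \<preceq> (a \<^bold>\<rightarrow> b) \<^bold>\<sqinter> a"
    using assms by (auto intro: meet_le1I meet_le2I)
  then have "?w \<preceq> b"
    using le_trans[OF _ imp_mp[of a b]] assms by simp
  moreover have "?w \<preceq> c"
    using assms by (auto intro: meet_le1I meet_le2I)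
  ultimately show "(a \<^bold>\<rightarrow> b) \<^bold>\<sqinter> c \<preceq> (a \<^bold>\<sqinter> c \<^bold>\<rightarrow> b \<^bold>\<sqinter> c) \<^bold>\<sqinter> c"
    using assms le_imp_iff by simp
next
  let ?z = "(a \<^bold>\<sqinter> c \<^bold>\<rightarrow> b \<^bold>\<sqinter> c) \<^bold>\<sqinter> c"
  have "?z \<^bold>\<sqinter> a \<preceq> (a \<^bold>\<sqinter> c \<^bold>\<rightarrow> b \<^bold>\<sqinter> c) \<^bold>\<sqinter> (a \<^bold>\<sqinter> c)"
    using assms by (auto intro: meet_le1I meet_le2I)
  then have "?z \<^bold>\<sqinter> a \<preceq> b \<^bold>\<sqinter> c"
    using le_trans[OF _ imp_mp[of "a \<^bold>\<sqinter> c" "b \<^bold>\<sqinter> c"]] assms by simp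
  then have "?z \<^bold>\<sqinter> a \<preceq> b"
    using le_trans[OF _ meet_le1[of b c]] assms by simp
  then show "?z \<preceq> (a \<^bold>\<rightarrow> b) \<^bold>\<sqinter> c"
    using assms le_imp_iff by simp
qed (use assms in simp_all)

lemma finite_has_lub:
  assumes "finite S" "S \<subseteq> carrier"
  shows "\<exists>x\<in>carrier. (\<forall>s\<in>S. s \<preceq> x) \<and> (\<forall>y\<in>carrier. (\<forall>s\<in>S. s \<preceq> y) \<longrightarrow> x \<preceq> y)"
  using assms
proof (induction S rule: finite_induct)
  case empty
  show ?case by (intro bexI[of _ "\<^bold>\<bottom>"]) auto
next
  case (insert a S)
  then obtain x where "x \<in> carrier" "\<forall>s\<in>S. s \<preceq> x" "\<forall>y\<in>carrier. (\<forall>s\<in>S. s \<preceq> y) \<longrightarrow> x \<preceq> y"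
    by auto
  with insert.prems show ?case
    by (intro bexI[of _ "a \<^bold>\<squnion> x"]) (auto intro: le_trans[of _ x "a \<^bold>\<squnion> x"])
qed

lemma finite_has_glb:
  assumes "finite S" "S \<subseteq> carrier"
  shows "\<exists>x\<in>carrier. (\<forall>s\<in>S. x \<preceq> s) \<and> (\<forall>y\<in>carrier. (\<forall>s\<in>S. y \<preceq> s) \<longrightarrow> y \<preceq> x)"
  using assms
proof (induction S rule: finite_induct)
  case empty
  show ?case by (intro bexI[of _ "\<^bold>\<top>"]) auto
next
  case (insert a S)
  then obtain x where "x \<in> carrier" "\<forall>s\<in>S. x \<preceq> s" "\<forall>y\<in>carrier. (\<forall>s\<in>S. y \<preceq> s) \<longrightarrow> y \<preceq> x"
    by auto
  with insert.prems show ?case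
    by (intro bexI[of _ "a \<^bold>\<sqinter> x"]) (auto intro: meet_le2I)
qed

lemma
  assumes "finite S" "S \<subseteq> carrier"
  shows bigjoin_closed: "bigjoin A S \<in> carrier"
    and bigjoin_upper: "s \<in> S \<Longrightarrow> s \<preceq> bigjoin A S"
    and bigjoin_least: "y \<in> carrier \<Longrightarrow> \<forall>s\<in>S. s \<preceq> y \<Longrightarrow> bigjoin A S \<preceq> y"
proof -
  obtain x where x: "x \<in> carrier" "\<forall>s\<in>S. s \<preceq> x" "\<forall>y\<in>carrier. (\<forall>s\<in>S. s \<preceq> y) \<longrightarrow> x \<preceq> y"
    using finite_has_lub[OF assms] by blast
  then have "bigjoin A S = x"
    unfolding bigjoin_def by (intro the_equality) (blast, meson le_antisym)
  with x show "bigjoin A S \<in> carrier" "s \<in> S \<Longrightarrow> s \<preceq> bigjoin A S"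
    "y \<in> carrier \<Longrightarrow> \<forall>s\<in>S. s \<preceq> y \<Longrightarrow> bigjoin A S \<preceq> y"
    by auto
qed

lemma
  assumes "finite S" "S \<subseteq> carrier"
  shows bigmeet_closed: "bigmeet A S \<in> carrier"
    and bigmeet_lower: "s \<in> S \<Longrightarrow> bigmeet A S \<preceq> s"
    and bigmeet_greatest: "y \<in> carrier \<Longrightarrow> \<forall>s\<in>S. y \<preceq> s \<Longrightarrow> y \<preceq> bigmeet A S"
proof -
  obtain x where x: "x \<in> carrier" "\<forall>s\<in>S. x \<preceq> s" "\<forall>y\<in>carrier. (\<forall>s\<in>S. y \<preceq> s) \<longrightarrow> y \<preceq> x"
    using finite_has_glb[OF assms] by blast
  then have "bigmeet A S = x"
    unfolding bigmeet_def by (intro the_equality) (blast, meson le_antisym)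
  with x show "bigmeet A S \<in> carrier" "s \<in> S \<Longrightarrow> bigmeet A S \<preceq> s"
    "y \<in> carrier \<Longrightarrow> \<forall>s\<in>S. y \<preceq> s \<Longrightarrow> y \<preceq> bigmeet A S"
    by auto
qed

lemma bigjoin_empty: "bigjoin A {} = \<^bold>\<bottom>"
  using bigjoin_least[of "{}" "\<^bold>\<bottom>"] bigjoin_closed[of "{}"] le_bottom_iff by simp

lemma bigjoin_insert:
  assumes "finite S" "S \<subseteq> carrier" "a \<in> carrier"
  shows "bigjoin A (insert a S) = a \<^bold>\<squnion> bigjoin A S"
proof -
  have S': "finite (insert a S)" "insert a S \<subseteq> carrier" using assms by auto
  show ?thesis
  proof (rule le_antisym)
    show "bigjoin A (insert a S) \<preceq> a \<^bold>\<squnion> bigjoin A S"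
      using assms bigjoin_closed[OF assms(1,2)] bigjoin_upper[OF assms(1,2)]
      by (intro bigjoin_least[OF S']) (auto intro: le_trans[of _ "bigjoin A S"])
    show "a \<^bold>\<squnion> bigjoin A S \<preceq> bigjoin A (insert a S)"
      using assms bigjoin_closed[OF S'] bigjoin_upper[OF S']
      by (simp add: bigjoin_closed bigjoin_least)
  qed (use assms S' in \<open>simp_all add: bigjoin_closed\<close>)
qed

text \<open>The join lies below the pseudo-complement \<open>x \<^bold>\<rightarrow> \<^bold>\<bottom>\<close>.\<close>

lemma meet_bigjoin_eq_bottom:
  assumes "finite S" "S \<subseteq> carrier" "x \<in> carrier" "\<forall>s\<in>S. s \<^bold>\<sqinter> x = \<^bold>\<bottom>"
  shows "bigjoin A S \<^bold>\<sqinter> x = \<^bold>\<bottom>"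
proof -
  have "bigjoin A S \<preceq> x \<^bold>\<rightarrow> \<^bold>\<bottom>"
    using assms by (intro bigjoin_least) (auto simp: le_neg_iff)
  then show ?thesis
    using assms bigjoin_closed le_neg_iff by simp
qed

lemma finite_has_minimal:
  assumes "finite carrier" "x \<in> S" "S \<subseteq> carrier"
  shows "\<exists>m\<in>S. \<forall>d\<in>S. d \<preceq> m \<longrightarrow> d = m"
proof -
  define below where "below m = card {y\<in>carrier. y \<preceq> m}" for m
  obtain m where m: "m \<in> S" "\<And>y. y \<in> S \<Longrightarrow> below m \<le> below y"
    using ex_has_least_nat[of "\<lambda>m. m \<in> S" x below] assms by blast
  have "d = m" if d: "d \<in> S" "d \<preceq> m" for d
  proof (rule ccontr)
    assume "d \<noteq> m"
    have dm: "d \<in> carrier" "m \<in> carrier" using d m assms by auto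
    have "{y\<in>carrier. y \<preceq> d} \<subseteq> {y\<in>carrier. y \<preceq> m}"
      using le_trans[of _ d m] d dm by blast
    moreover have "m \<notin> {y\<in>carrier. y \<preceq> d}"
      using le_antisym[of m d] d dm \<open>d \<noteq> m\<close> by blast
    moreover have "m \<in> {y\<in>carrier. y \<preceq> m}" using dm by simp
    ultimately have "{y\<in>carrier. y \<preceq> d} \<subset> {y\<in>carrier. y \<preceq> m}"
      by (intro psubsetI) auto
    then have "below d < below m"
      unfolding below_def using assms(1) by (simp add: psubset_card_mono)
    with m(2)[OF d(1)] show False by linarith
  qed
  with m show ?thesis by blast
qed

end

section \<open>Monadic and epistemic Heyting algebras\<close>

locale monadic_heyting = heyting +
  assumes monadic: "monadic_heyting_algebra A"
begin

abbreviation dia where "dia \<equiv> hdia A"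
abbreviation box where "box \<equiv> hbox A"

lemma dia_closed [simp]: "a \<in> carrier \<Longrightarrow> dia i a \<in> carrier"
  and box_closed [simp]: "a \<in> carrier \<Longrightarrow> box i a \<in> carrier"
  and dia_mono: "a \<preceq> b \<Longrightarrow> a \<in> carrier \<Longrightarrow> b \<in> carrier \<Longrightarrow> dia i a \<preceq> dia i b"
  and box_mono: "a \<preceq> b \<Longrightarrow> a \<in> carrier \<Longrightarrow> b \<in> carrier \<Longrightarrow> box i a \<preceq> box i b"
  and le_dia: "a \<in> carrier \<Longrightarrow> a \<preceq> dia i a"
  and box_le: "a \<in> carrier \<Longrightarrow> box i a \<preceq> a"
  and dia_join_le: "a \<in> carrier \<Longrightarrow> b \<in> carrier \<Longrightarrow> dia i (a \<^bold>\<squnion> b) \<preceq> dia i a \<^bold>\<squnion> dia i b"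
  and box_imp_le: "a \<in> carrier \<Longrightarrow> b \<in> carrier \<Longrightarrow> box i (a \<^bold>\<rightarrow> b) \<preceq> box i a \<^bold>\<rightarrow> box i b"
  and dia_le_box_dia: "a \<in> carrier \<Longrightarrow> dia i a \<preceq> box i (dia i a)"
  and dia_box_le_box: "a \<in> carrier \<Longrightarrow> dia i (box i a) \<preceq> box i a"
  and box_imp_le_dia_imp: "a \<in> carrier \<Longrightarrow> b \<in> carrier \<Longrightarrow> box i (a \<^bold>\<rightarrow> b) \<preceq> dia i a \<^bold>\<rightarrow> dia i b"
  and dia_bottom_le: "dia i \<^bold>\<bottom> \<preceq> \<^bold>\<bottom>"
  and top_le_box_top: "\<^bold>\<top> \<preceq> box i \<^bold>\<top>"
  using monadic unfolding monadic_heyting_algebra_def by (elim conjE; metis)+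

lemma dia_bottom [simp]: "dia i \<^bold>\<bottom> = \<^bold>\<bottom>"
  using dia_bottom_le le_bottom_iff by simp

lemma box_top [simp]: "box i \<^bold>\<top> = \<^bold>\<top>"
  using top_le_box_top box_le le_antisym by simp

lemma dia_idem [simp]:
  assumes "a \<in> carrier"
  shows "dia i (dia i a) = dia i a"
proof -
  have "dia i (dia i a) \<preceq> dia i (box i (dia i a))"
    using assms dia_le_box_dia dia_mono by simp
  then have "dia i (dia i a) \<preceq> box i (dia i a)"
    using le_trans[OF _ dia_box_le_box[of "dia i a" i]] assms by simp
  then have "dia i (dia i a) \<preceq> dia i a"
    using le_trans[OF _ box_le[of "dia i a" i]] assms by simp
  then show ?thesis
    using assms le_dia le_antisym by simp
qed

lemma box_mp: "a \<in> carrier \<Longrightarrow> b \<in> carrier \<Longrightarrow> box i (a \<^bold>\<rightarrow> b) \<^bold>\<sqinter> box i a \<preceq> box i b"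
  using box_imp_le[of a b i] le_imp_iff by simp

lemma dia_meet_closed:
  assumes "x \<in> carrier" "y \<in> carrier" "dia i x = x" "dia i y = y"
  shows "dia i (x \<^bold>\<sqinter> y) = x \<^bold>\<sqinter> y"
proof -
  have "dia i (x \<^bold>\<sqinter> y) \<preceq> x" "dia i (x \<^bold>\<sqinter> y) \<preceq> y"
    using dia_mono[of "x \<^bold>\<sqinter> y" x i] dia_mono[of "x \<^bold>\<sqinter> y" y i] assms by simp_all
  then show ?thesis
    using assms le_dia le_antisym by simp
qed

lemma i_minimalD:
  assumes "c \<in> Min_i A i"
  shows "c \<in> carrier" "c \<noteq> \<^bold>\<bottom>" "dia i c = c"
    and "d \<in> carrier \<Longrightarrow> d \<prec> c \<Longrightarrow> dia i d = d \<Longrightarrow> d = \<^bold>\<bottom>"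
  using assms unfolding Min_i_def i_minimal_def by blast+

lemma i_minimal_closed: "c \<in> Min_i A i \<Longrightarrow> c \<in> carrier"
  by (rule i_minimalD(1))

lemma dia_neg_dia:
  assumes a: "a \<in> carrier"
  shows "dia i (dia i a \<^bold>\<rightarrow> \<^bold>\<bottom>) = dia i a \<^bold>\<rightarrow> \<^bold>\<bottom>"
proof -
  let ?n = "dia i a \<^bold>\<rightarrow> \<^bold>\<bottom>"
  have "dia i a \<preceq> ?n \<^bold>\<rightarrow> \<^bold>\<bottom>"
    using a le_imp_iff imp_mp meet_comm by (simp add: le_neg_iff)
  then have "box i (dia i a) \<preceq> box i (?n \<^bold>\<rightarrow> \<^bold>\<bottom>)"
    using box_mono a by simp
  then have "dia i a \<preceq> box i (?n \<^bold>\<rightarrow> \<^bold>\<bottom>)"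
    using a dia_le_box_dia le_trans by (meson box_closed dia_closed imp_closed bottom_closed)
  moreover have "box i (?n \<^bold>\<rightarrow> \<^bold>\<bottom>) \<preceq> dia i ?n \<^bold>\<rightarrow> \<^bold>\<bottom>"
    using box_imp_le_dia_imp[of ?n "\<^bold>\<bottom>" i] a by simp
  ultimately have "dia i a \<preceq> dia i ?n \<^bold>\<rightarrow> \<^bold>\<bottom>"
    using a le_trans by (meson box_closed dia_closed imp_closed bottom_closed)
  then have "dia i ?n \<preceq> ?n"
    using a by (simp add: le_neg_iff meet_comm)
  then show ?thesis
    using a le_dia le_antisym by simp
qed

lemma i_minimal_unique:
  assumes F: "F \<in> Min_i A i" "F' \<in> Min_i A i"
    and x: "x \<in> carrier" "x \<preceq> F" "x \<preceq> F'" "x \<noteq> \<^bold>\<bottom>"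
  shows "F = F'"
proof -
  note F_props = i_minimalD[OF F(1)] i_minimalD[OF F(2)]
  have closed: "dia i (F \<^bold>\<sqinter> F') = F \<^bold>\<sqinter> F'"
    using dia_meet_closed F_props by blast
  have "F \<^bold>\<sqinter> F' \<noteq> \<^bold>\<bottom>"
    using x F_props le_meet_iff[of F F' x] le_bottom_iff by force
  then have "\<not> F \<^bold>\<sqinter> F' \<prec> F" "\<not> F \<^bold>\<sqinter> F' \<prec> F'"
    using F_props closed by (metis meet_closed)+
  then show ?thesis
    using F_props meet_le1[of F F'] meet_le2[of F F'] unfolding hlt_def by metis
qed

lemma the_i_minimal_above:
  assumes F: "F \<in> Min_i A i" and x: "x \<in> carrier" "x \<preceq> F" "x \<noteq> \<^bold>\<bottom>"
  shows "(THE F'. F' \<in> Min_i A i \<and> x \<preceq> F') = F"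
proof (rule the_equality)
  fix F' assume "F' \<in> Min_i A i \<and> x \<preceq> F'"
  then show "F' = F"
    using i_minimal_unique[OF _ F x(1) _ x(2,3)] by blast
qed (use F x in simp)

end

locale epistemic_heyting = monadic_heyting +
  assumes epistemic: "epistemic_heyting_algebra A"
begin

lemma finite_carrier: "finite carrier"
  and dia_excluded_middle: "a \<in> carrier \<Longrightarrow> dia i a \<^bold>\<squnion> (dia i a \<^bold>\<rightarrow> \<^bold>\<bottom>) = \<^bold>\<top>"
  using epistemic unfolding epistemic_heyting_algebra_def hneg_def by blast+

lemma exists_i_minimal_below:
  assumes "x \<in> carrier" "dia i x = x" "x \<noteq> \<^bold>\<bottom>"
  shows "\<exists>t\<in>Min_i A i. t \<preceq> x"
proof -
  let ?S = "{d\<in>carrier. dia i d = d \<and> d \<noteq> \<^bold>\<bottom> \<and> d \<preceq> x}"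
  obtain m where m: "m \<in> ?S" "\<forall>d\<in>?S. d \<preceq> m \<longrightarrow> d = m"
    using finite_has_minimal[OF finite_carrier, of x ?S] assms by auto
  have "m \<in> Min_i A i"
    unfolding Min_i_def i_minimal_def
  proof (intro CollectI conjI ballI impI)
    fix d assume d: "d \<in> carrier" "d \<prec> m \<and> dia i d = d"
    show "d = \<^bold>\<bottom>"
    proof (rule ccontr)
      assume "d \<noteq> \<^bold>\<bottom>"
      then have "d \<in> ?S"
        using d m assms le_trans[of d m x] unfolding hlt_def by auto
      then show False
        using m d unfolding hlt_def by blast
    qed
  qed (use m in auto)
  with m show ?thesis by blast
qed

text \<open>An element minimal among the \<open>\<diamond>\<^sub>i\<close>-closed elements that meet \<open>c\<close> is \<open>i\<close>-minimal: a
  smaller \<open>\<diamond>\<^sub>i\<close>-closed \<open>d\<close> disjoint from \<open>c\<close> would make \<open>H \<^bold>\<sqinter> (d \<^bold>\<rightarrow> \<^bold>\<bottom>)\<close> a smaller competitor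
  unless \<open>d = \<^bold>\<bottom>\<close>.\<close>

lemma i_minimal_if_minimal_meeting:
  assumes c: "c \<in> carrier"
    and H: "H \<in> carrier" "dia i H = H" "H \<^bold>\<sqinter> c \<noteq> \<^bold>\<bottom>"
    and minimal: "\<And>d. d \<in> carrier \<Longrightarrow> dia i d = d \<Longrightarrow> d \<^bold>\<sqinter> c \<noteq> \<^bold>\<bottom> \<Longrightarrow> d \<preceq> H \<Longrightarrow> d = H"
  shows "H \<in> Min_i A i"
  unfolding Min_i_def i_minimal_def
proof (intro CollectI conjI ballI impI)
  show "H \<noteq> \<^bold>\<bottom>" using H c by auto
  fix d assume d: "d \<in> carrier" "d \<prec> H \<and> dia i d = d"
  then have dH: "d \<preceq> H" "d \<noteq> H" "dia i d = d" unfolding hlt_def by auto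
  show "d = \<^bold>\<bottom>"
  proof (cases "d \<^bold>\<sqinter> c = \<^bold>\<bottom>")
    case False
    then show ?thesis using minimal d(1) dH by blast
  next
    case True
    let ?n = "d \<^bold>\<rightarrow> \<^bold>\<bottom>"
    have n: "?n \<in> carrier" "dia i ?n = ?n"
      using dia_neg_dia[OF d(1), of i] dH d by simp_all
    have "c \<preceq> ?n"
      using le_neg_iff d c True meet_comm by simp
    then have "H \<^bold>\<sqinter> ?n \<^bold>\<sqinter> c = H \<^bold>\<sqinter> c"
      using H c n by (intro le_antisym) (simp_all add: meet_le1I meet_le2I)
    then have "H \<^bold>\<sqinter> ?n = H"
      using minimal[of "H \<^bold>\<sqinter> ?n"] dia_meet_closed[OF H(1) n(1) H(2) n(2)] H n by simp
    then have "H \<preceq> ?n"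
      using meet_le2[OF H(1) n(1)] by simp
    then have "d \<preceq> ?n"
      using le_trans[OF dH(1)] d n H by simp
    then show ?thesis
      using le_neg_iff d meet_absorb1[of d d] by simp
  qed
qed (use H in auto)

lemma exists_i_minimal_meeting_below:
  assumes c: "c \<in> carrier" and x: "x \<in> carrier" "dia i x = x" "x \<^bold>\<sqinter> c \<noteq> \<^bold>\<bottom>"
  shows "\<exists>H\<in>Min_i A i. H \<preceq> x \<and> H \<^bold>\<sqinter> c \<noteq> \<^bold>\<bottom>"
proof -
  let ?S = "{d\<in>carrier. dia i d = d \<and> d \<^bold>\<sqinter> c \<noteq> \<^bold>\<bottom> \<and> d \<preceq> x}"
  obtain H where H: "H \<in> ?S" "\<forall>d\<in>?S. d \<preceq> H \<longrightarrow> d = H"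
    using finite_has_minimal[OF finite_carrier, of x ?S] x by auto
  have "H \<in> Min_i A i"
  proof (rule i_minimal_if_minimal_meeting[OF c])
    fix d assume "d \<in> carrier" "dia i d = d" "d \<^bold>\<sqinter> c \<noteq> \<^bold>\<bottom>" "d \<preceq> H"
    then show "d = H" using H x le_trans[of d H x] by auto
  qed (use H in auto)
  with H show ?thesis by blast
qed

end

section \<open>The product algebra\<close>

locale epistemic_product = epistemic_heyting A for A :: "('a, 'i) mha" +
  fixes E :: "'e set" and sim :: "'i \<Rightarrow> 'e \<Rightarrow> 'e \<Rightarrow> bool"
  assumes finite_E: "finite E"
    and sim_refl: "e \<in> E \<Longrightarrow> sim i e e"
    and sim_sym: "e \<in> E \<Longrightarrow> e' \<in> E \<Longrightarrow> sim i e e' \<Longrightarrow> sim i e' e"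
    and sim_trans: "e \<in> E \<Longrightarrow> e' \<in> E \<Longrightarrow> e'' \<in> E \<Longrightarrow> sim i e e' \<Longrightarrow> sim i e' e'' \<Longrightarrow> sim i e e''"
begin

abbreviation A' where "A' \<equiv> inter_alg A E sim"

definition prod_dia :: "'i \<Rightarrow> ('e \<Rightarrow> 'a) \<Rightarrow> 'e \<Rightarrow> 'a" where
  "prod_dia i f e = bigjoin A {dia i (f e') | e'. e' \<in> E \<and> sim i e' e}"

definition prod_box :: "'i \<Rightarrow> ('e \<Rightarrow> 'a) \<Rightarrow> 'e \<Rightarrow> 'a" where
  "prod_box i f e = bigmeet A {box i (f e') | e'. e' \<in> E \<and> sim i e' e}"

lemma inter_alg_simps:
  "hcar A' = PiE E (\<lambda>_. carrier)"
  "hle A' f g \<longleftrightarrow> (\<forall>e\<in>E. f e \<preceq> g e)"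
  "hmeet A' f g = restrict (\<lambda>e. f e \<^bold>\<sqinter> g e) E"
  "hjoin A' f g = restrict (\<lambda>e. f e \<^bold>\<squnion> g e) E"
  "himp A' f g = restrict (\<lambda>e. f e \<^bold>\<rightarrow> g e) E"
  "hbot A' = restrict (\<lambda>e. \<^bold>\<bottom>) E"
  "htop A' = restrict (\<lambda>e. \<^bold>\<top>) E"
  "hdia A' i f = restrict (prod_dia i f) E"
  "hbox A' i f = restrict (prod_box i f) E"
  unfolding inter_alg_def prod_dia_def prod_box_def by (simp_all add: restrict_def)

lemma Pi_carrier [simp]: "f \<in> E \<rightarrow> carrier \<Longrightarrow> e \<in> E \<Longrightarrow> f e \<in> carrier"
  by blast

lemma PiE_carrier [simp]: "f \<in> PiE E (\<lambda>_. carrier) \<Longrightarrow> e \<in> E \<Longrightarrow> f e \<in> carrier"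
  by blast

lemma finite_class_image: "finite {g e' | e'. e' \<in> E \<and> sim i e' e}"
proof -
  have "{g e' | e'. e' \<in> E \<and> sim i e' e} = g ` {e'\<in>E. sim i e' e}" by auto
  then show ?thesis using finite_E by simp
qed

lemma
  assumes "f \<in> E \<rightarrow> carrier" "e \<in> E"
  shows prod_dia_closed: "prod_dia i f e \<in> carrier"
    and prod_dia_upper: "e' \<in> E \<Longrightarrow> sim i e' e \<Longrightarrow> dia i (f e') \<preceq> prod_dia i f e"
    and prod_dia_least:
      "y \<in> carrier \<Longrightarrow> (\<And>e'. e' \<in> E \<Longrightarrow> sim i e' e \<Longrightarrow> dia i (f e') \<preceq> y) \<Longrightarrow> prod_dia i f e \<preceq> y"
proof -
  have S: "{dia i (f e') | e'. e' \<in> E \<and> sim i e' e} \<subseteq> carrier"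
    using assms by auto
  show "prod_dia i f e \<in> carrier" "e' \<in> E \<Longrightarrow> sim i e' e \<Longrightarrow> dia i (f e') \<preceq> prod_dia i f e"
    "y \<in> carrier \<Longrightarrow> (\<And>e'. e' \<in> E \<Longrightarrow> sim i e' e \<Longrightarrow> dia i (f e') \<preceq> y) \<Longrightarrow> prod_dia i f e \<preceq> y"
    unfolding prod_dia_def using bigjoin_closed[OF finite_class_image S]
      bigjoin_upper[OF finite_class_image S] bigjoin_least[OF finite_class_image S] by blast+
qed

lemma
  assumes "f \<in> E \<rightarrow> carrier" "e \<in> E"
  shows prod_box_closed: "prod_box i f e \<in> carrier"
    and prod_box_lower: "e' \<in> E \<Longrightarrow> sim i e' e \<Longrightarrow> prod_box i f e \<preceq> box i (f e')"
    and prod_box_greatest: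
      "y \<in> carrier \<Longrightarrow> (\<And>e'. e' \<in> E \<Longrightarrow> sim i e' e \<Longrightarrow> y \<preceq> box i (f e')) \<Longrightarrow> y \<preceq> prod_box i f e"
proof -
  have S: "{box i (f e') | e'. e' \<in> E \<and> sim i e' e} \<subseteq> carrier"
    using assms by auto
  show "prod_box i f e \<in> carrier" "e' \<in> E \<Longrightarrow> sim i e' e \<Longrightarrow> prod_box i f e \<preceq> box i (f e')"
    "y \<in> carrier \<Longrightarrow> (\<And>e'. e' \<in> E \<Longrightarrow> sim i e' e \<Longrightarrow> y \<preceq> box i (f e')) \<Longrightarrow> y \<preceq> prod_box i f e"
    unfolding prod_box_def using bigmeet_closed[OF finite_class_image S]
      bigmeet_lower[OF finite_class_image S] bigmeet_greatest[OF finite_class_image S] by blast+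
qed

lemma prod_dia_restrict [simp]: "prod_dia i (restrict f E) e = prod_dia i f e"
  unfolding prod_dia_def by (rule arg_cong[where f = "bigjoin A"]) force

lemma prod_box_restrict [simp]: "prod_box i (restrict f E) e = prod_box i f e"
  unfolding prod_box_def by (rule arg_cong[where f = "bigmeet A"]) force

lemma prod_dia_sim: "e \<in> E \<Longrightarrow> e' \<in> E \<Longrightarrow> sim i e e' \<Longrightarrow> prod_dia i f e = prod_dia i f e'"
  unfolding prod_dia_def using sim_trans sim_sym by metis

lemma heyting_inter_alg: "heyting_algebra A'"
  unfolding heyting_algebra_def inter_alg_simps
proof (intro conjI ballI impI)
  fix x y assume "x \<in> PiE E (\<lambda>_. carrier)" "y \<in> PiE E (\<lambda>_. carrier)"
    "(\<forall>e\<in>E. x e \<preceq> y e) \<and> (\<forall>e\<in>E. y e \<preceq> x e)"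
  then show "x = y" by (intro PiE_ext[of x E "\<lambda>_. carrier" y]) (auto intro: le_antisym)
next
  fix x y z e assume "x \<in> PiE E (\<lambda>_. carrier)" "y \<in> PiE E (\<lambda>_. carrier)" "z \<in> PiE E (\<lambda>_. carrier)"
    "(\<forall>e\<in>E. x e \<preceq> y e) \<and> (\<forall>e\<in>E. y e \<preceq> z e)" "e \<in> E"
  then show "x e \<preceq> z e" using le_trans[of "x e" "y e" "z e"] by blast
next
  fix x y z assume "x \<in> PiE E (\<lambda>_. carrier)" "y \<in> PiE E (\<lambda>_. carrier)" "z \<in> PiE E (\<lambda>_. carrier)"
  then show "(\<forall>e\<in>E. restrict (\<lambda>e. z e \<^bold>\<sqinter> x e) E e \<preceq> y e) =
             (\<forall>e\<in>E. z e \<preceq> restrict (\<lambda>e. x e \<^bold>\<rightarrow> y e) E e)"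
    by (simp add: le_imp_iff)
qed (auto intro: meet_le1I meet_le2I)

text \<open>Each component of \<open>\<diamond>'\<^sub>i f\<close> is a join of \<open>\<diamond>\<^sub>i\<close>-values, each of which lies below the
  \<open>\<box>\<^sub>i\<close> of itself (\<open>\<diamond>a \<preceq> \<box>\<diamond>a\<close>), hence below the \<open>\<box>\<^sub>i\<close> of the join.\<close>

lemma prod_dia_le_box:
  assumes f: "f \<in> E \<rightarrow> carrier" and e: "e \<in> E"
  shows "prod_dia i f e \<preceq> box i (prod_dia i f e)"
proof (rule prod_dia_least[OF f e])
  fix e' assume e': "e' \<in> E" "sim i e' e"
  have "dia i (f e') \<preceq> box i (dia i (f e'))"
    using dia_le_box_dia f e' by auto
  moreover have "box i (dia i (f e')) \<preceq> box i (prod_dia i f e)"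
    using box_mono prod_dia_upper[OF f e e'] prod_dia_closed[OF f e] f e' by simp
  ultimately show "dia i (f e') \<preceq> box i (prod_dia i f e)"
    using le_trans[of "dia i (f e')" "box i (dia i (f e'))" "box i (prod_dia i f e)"]
      f e' prod_dia_closed[OF f e] by simp
qed (use prod_dia_closed[OF f e] in simp)

lemma prod_dia_dia_closed:
  assumes f: "f \<in> E \<rightarrow> carrier" and e: "e \<in> E"
  shows "dia i (prod_dia i f e) = prod_dia i f e"
proof -
  let ?d = "prod_dia i f e"
  have d: "?d \<in> carrier" using prod_dia_closed[OF f e] .
  have "dia i ?d \<preceq> dia i (box i ?d)"
    using dia_mono prod_dia_le_box[OF f e] d by simp
  then have "dia i ?d \<preceq> box i ?d"
    using dia_box_le_box d le_trans by (meson box_closed dia_closed)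
  then have "dia i ?d \<preceq> ?d"
    using box_le d le_trans by (meson box_closed dia_closed)
  then show ?thesis
    using le_dia d le_antisym by simp
qed

lemma prod_dia_Pi [simp]: "f \<in> E \<rightarrow> carrier \<Longrightarrow> prod_dia i f \<in> E \<rightarrow> carrier"
  using prod_dia_closed by blast

context
  fixes f :: "'e \<Rightarrow> 'a" and e :: 'e
  assumes f: "f \<in> E \<rightarrow> carrier" and e: "e \<in> E"
begin

lemma prod_le_dia: "f e \<preceq> prod_dia i f e"
  using le_trans[OF le_dia prod_dia_upper[OF f e e sim_refl[OF e]]] f e prod_dia_closed[OF f e]
  by simp

lemma prod_box_le: "prod_box i f e \<preceq> f e"
  using le_trans[OF prod_box_lower[OF f e e sim_refl[OF e]] box_le] f e prod_box_closed[OF f e]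
  by simp

lemma prod_dia_le_box_dia: "prod_dia i f e \<preceq> prod_box i (prod_dia i f) e"
proof (rule prod_box_greatest)
  fix e' assume "e' \<in> E" "sim i e' e"
  then show "prod_dia i f e \<preceq> box i (prod_dia i f e')"
    using prod_dia_le_box[OF f e] prod_dia_sim[OF _ e] by (metis sim_sym e)
qed (use f e prod_dia_closed in auto)

lemma prod_dia_box_le_box: "prod_dia i (prod_box i f) e \<preceq> prod_box i f e"
proof (rule prod_dia_least)
  fix e' assume e': "e' \<in> E" "sim i e' e"
  show "dia i (prod_box i f e') \<preceq> prod_box i f e"
  proof (rule prod_box_greatest[OF f e])
    fix e'' assume e'': "e'' \<in> E" "sim i e'' e"
    have "sim i e'' e'" using sim_trans[OF e''(1) e e'(1) e''(2) sim_sym[OF e'(1) e e'(2)]] .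
    then have "prod_box i f e' \<preceq> box i (f e'')"
      using prod_box_lower[OF f e'(1) e''(1)] by simp
    then have "dia i (prod_box i f e') \<preceq> dia i (box i (f e''))"
      using dia_mono prod_box_closed[OF f e'(1)] f e'' by simp
    then show "dia i (prod_box i f e') \<preceq> box i (f e'')"
      using le_trans[of _ "dia i (box i (f e''))" "box i (f e'')"] dia_box_le_box[of "f e''" i]
        prod_box_closed[OF f e'(1)] f e'' by simp
  qed (use prod_box_closed[OF f e'(1)] in simp)
qed (use f e prod_box_closed in auto)

end

context
  fixes f g :: "'e \<Rightarrow> 'a" and e :: 'e
  assumes f: "f \<in> E \<rightarrow> carrier" and g: "g \<in> E \<rightarrow> carrier" and e: "e \<in> E"
begin

lemma prod_dia_mono: "\<forall>e\<in>E. f e \<preceq> g e \<Longrightarrow> prod_dia i f e \<preceq> prod_dia i g e"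
proof (rule prod_dia_least[OF f e])
  fix e' assume "\<forall>e\<in>E. f e \<preceq> g e" and e': "e' \<in> E" "sim i e' e"
  then show "dia i (f e') \<preceq> prod_dia i g e"
    using le_trans[OF dia_mono prod_dia_upper[OF g e e']] prod_dia_closed[OF g e] f g by simp
qed (use prod_dia_closed[OF g e] in simp)

lemma prod_box_mono: "\<forall>e\<in>E. f e \<preceq> g e \<Longrightarrow> prod_box i f e \<preceq> prod_box i g e"
proof (rule prod_box_greatest[OF g e])
  fix e' assume "\<forall>e\<in>E. f e \<preceq> g e" and e': "e' \<in> E" "sim i e' e"
  then show "prod_box i f e \<preceq> box i (g e')"
    using le_trans[OF prod_box_lower[OF f e e'] box_mono] prod_box_closed[OF f e] f g by simp
qed (use prod_box_closed[OF f e] in simp)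

lemma prod_dia_join_le: "prod_dia i (\<lambda>e. f e \<^bold>\<squnion> g e) e \<preceq> prod_dia i f e \<^bold>\<squnion> prod_dia i g e"
proof (rule prod_dia_least)
  fix e' assume e': "e' \<in> E" "sim i e' e"
  have "dia i (f e' \<^bold>\<squnion> g e') \<preceq> dia i (f e') \<^bold>\<squnion> dia i (g e')"
    using dia_join_le f g e' by simp
  moreover have "dia i (f e') \<^bold>\<squnion> dia i (g e') \<preceq> prod_dia i f e \<^bold>\<squnion> prod_dia i g e"
    using join_mono prod_dia_upper[OF f e e'] prod_dia_upper[OF g e e']
      prod_dia_closed[OF f e] prod_dia_closed[OF g e] f g e' by simp
  ultimately show "dia i (f e' \<^bold>\<squnion> g e') \<preceq> prod_dia i f e \<^bold>\<squnion> prod_dia i g e"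
    using le_trans[of "dia i (f e' \<^bold>\<squnion> g e')" "dia i (f e') \<^bold>\<squnion> dia i (g e')"] f g e'
      prod_dia_closed[OF f e] prod_dia_closed[OF g e] by simp
qed (use f g e prod_dia_closed in auto)

lemma prod_box_imp_le: "prod_box i (\<lambda>e. f e \<^bold>\<rightarrow> g e) e \<preceq> prod_box i f e \<^bold>\<rightarrow> prod_box i g e"
proof -
  let ?h = "\<lambda>e. f e \<^bold>\<rightarrow> g e"
  have h: "?h \<in> E \<rightarrow> carrier" using f g by simp
  have c: "prod_box i ?h e \<in> carrier" "prod_box i f e \<in> carrier" "prod_box i g e \<in> carrier"
    using prod_box_closed f g h e by blast+
  have "prod_box i ?h e \<^bold>\<sqinter> prod_box i f e \<preceq> prod_box i g e"
  proof (rule prod_box_greatest[OF g e])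
    fix e' assume e': "e' \<in> E" "sim i e' e"
    have le: "prod_box i ?h e \<^bold>\<sqinter> prod_box i f e \<preceq> box i (f e' \<^bold>\<rightarrow> g e') \<^bold>\<sqinter> box i (f e')"
      using meet_mono prod_box_lower[OF h e e'] prod_box_lower[OF f e e'] c f g e' by simp
    show "prod_box i ?h e \<^bold>\<sqinter> prod_box i f e \<preceq> box i (g e')"
      using le_trans[OF le box_mp] c f g e' by simp
  qed (use c in simp)
  then show ?thesis using le_imp_iff c by simp
qed

lemma prod_box_imp_le_dia_imp:
  "prod_box i (\<lambda>e. f e \<^bold>\<rightarrow> g e) e \<preceq> prod_dia i f e \<^bold>\<rightarrow> prod_dia i g e"
proof -
  let ?h = "\<lambda>e. f e \<^bold>\<rightarrow> g e"
  have h: "?h \<in> E \<rightarrow> carrier" using f g by simp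
  let ?b = "prod_box i ?h e"
  have c: "?b \<in> carrier" "prod_dia i f e \<in> carrier" "prod_dia i g e \<in> carrier"
    using prod_box_closed prod_dia_closed f g h e by blast+
  have "prod_dia i f e \<preceq> ?b \<^bold>\<rightarrow> prod_dia i g e"
  proof (rule prod_dia_least[OF f e])
    fix e' assume e': "e' \<in> E" "sim i e' e"
    have "?b \<preceq> box i (f e' \<^bold>\<rightarrow> g e')"
      using prod_box_lower[OF h e e'] by simp
    then have "?b \<preceq> dia i (f e') \<^bold>\<rightarrow> dia i (g e')"
      using le_trans[OF _ box_imp_le_dia_imp] c f g e' by simp
    then have "?b \<^bold>\<sqinter> dia i (f e') \<preceq> dia i (g e')"
      using le_imp_iff c f g e' by simp
    then have "?b \<^bold>\<sqinter> dia i (f e') \<preceq> prod_dia i g e"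
      using le_trans[OF _ prod_dia_upper[OF g e e']] c f g e' by simp
    then show "dia i (f e') \<preceq> ?b \<^bold>\<rightarrow> prod_dia i g e"
      using le_imp_iff meet_comm[of ?b "dia i (f e')"] c f e' by simp
  qed (use c in simp)
  then have "?b \<^bold>\<sqinter> prod_dia i f e \<preceq> prod_dia i g e"
    using le_imp_iff meet_comm[of ?b "prod_dia i f e"] c by simp
  then show ?thesis
    using le_imp_iff c by simp
qed

end

lemma prod_dia_bottom: "e \<in> E \<Longrightarrow> prod_dia i (\<lambda>e. \<^bold>\<bottom>) e = \<^bold>\<bottom>"
  using prod_dia_least[of "\<lambda>e. \<^bold>\<bottom>" e "\<^bold>\<bottom>" i] le_bottom_iff prod_dia_closed by simp

lemma prod_box_top: "e \<in> E \<Longrightarrow> prod_box i (\<lambda>e. \<^bold>\<top>) e = \<^bold>\<top>"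
  using prod_box_greatest[of "\<lambda>e. \<^bold>\<top>" e "\<^bold>\<top>" i] prod_box_closed le_antisym by simp

lemma inter_alg_carrier_Pi: "f \<in> hcar A' \<Longrightarrow> f \<in> E \<rightarrow> carrier"
  by (auto simp: inter_alg_simps)

lemma monadic_inter_alg: "monadic_heyting_algebra A'"
  unfolding monadic_heyting_algebra_def
proof (intro conjI allI ballI impI heyting_inter_alg)
  fix i f assume "f \<in> hcar A'"
  then have f: "f \<in> E \<rightarrow> carrier" by (rule inter_alg_carrier_Pi)
  show "hdia A' i f \<in> hcar A'" "hbox A' i f \<in> hcar A'"
    using prod_dia_closed[OF f] prod_box_closed[OF f] by (auto simp: inter_alg_simps)
  show "hle A' f (hdia A' i f)" "hle A' (hbox A' i f) f"
    using prod_le_dia[OF f] prod_box_le[OF f] by (simp_all add: inter_alg_simps)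
  show "hle A' (hdia A' i f) (hbox A' i (hdia A' i f))"
    "hle A' (hdia A' i (hbox A' i f)) (hbox A' i f)"
    using prod_dia_le_box_dia[OF f] prod_dia_box_le_box[OF f] by (simp_all add: inter_alg_simps)
  fix g assume "g \<in> hcar A'"
  then have g: "g \<in> E \<rightarrow> carrier" by (rule inter_alg_carrier_Pi)
  show "hle A' (hdia A' i (hjoin A' f g)) (hjoin A' (hdia A' i f) (hdia A' i g))"
    "hle A' (hbox A' i (himp A' f g)) (himp A' (hbox A' i f) (hbox A' i g))"
    "hle A' (hbox A' i (himp A' f g)) (himp A' (hdia A' i f) (hdia A' i g))"
    using prod_dia_join_le[OF f g] prod_box_imp_le[OF f g] prod_box_imp_le_dia_imp[OF f g]
    by (simp_all add: inter_alg_simps)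
  assume "hle A' f g"
  then show "hle A' (hdia A' i f) (hdia A' i g)" "hle A' (hbox A' i f) (hbox A' i g)"
    using prod_dia_mono[OF f g] prod_box_mono[OF f g] by (simp_all add: inter_alg_simps)
next
  fix i
  show "hle A' (hdia A' i (hbot A')) (hbot A')" "hle A' (htop A') (hbox A' i (htop A'))"
    using prod_dia_bottom prod_box_top by (simp_all add: inter_alg_simps)
qed

lemma epistemic_inter_alg: "epistemic_heyting_algebra A'"
  unfolding epistemic_heyting_algebra_def
proof (intro conjI monadic_inter_alg allI ballI)
  show "finite (hcar A')"
    using finite_E finite_carrier by (simp add: inter_alg_simps finite_PiE)
  fix i f assume "f \<in> hcar A'"
  then have f: "f \<in> E \<rightarrow> carrier" by (rule inter_alg_carrier_Pi)
  have "prod_dia i f e \<^bold>\<squnion> (prod_dia i f e \<^bold>\<rightarrow> \<^bold>\<bottom>) = \<^bold>\<top>" if "e \<in> E" for e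
    using dia_excluded_middle[OF prod_dia_closed[OF f that, of i], of i] prod_dia_dia_closed[OF f that, of i]
    by simp
  then show "hjoin A' (hdia A' i f) (hneg A' (hdia A' i f)) = htop A'"
    unfolding hneg_def inter_alg_simps by (intro restrict_ext) simp
qed

sublocale A': epistemic_heyting A'
  using heyting_inter_alg monadic_inter_alg epistemic_inter_alg by unfold_locales

lemma inter_alg_dia_fixed:
  assumes "H \<in> hcar A'" "hdia A' i H = H" "e \<in> E"
  shows "prod_dia i H e = H e"
  using fun_cong[OF assms(2)[unfolded inter_alg_simps], of e] assms(3) by simp

lemma inter_alg_dia_fixed_sim:
  assumes "H \<in> hcar A'" "hdia A' i H = H" "e \<in> E" "e' \<in> E" "sim i e e'"
  shows "H e = H e'"
  using inter_alg_dia_fixed[OF assms(1,2)] prod_dia_sim[OF assms(3-5)] assms(3,4) by metis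

lemma class_indicator:
  assumes a: "a \<in> carrier" "dia i a = a" and e0: "e0 \<in> E"
  defines "D \<equiv> restrict (\<lambda>e. if sim i e e0 then a else \<^bold>\<bottom>) E"
  shows "D \<in> hcar A'" "hdia A' i D = D"
proof -
  let ?D = "\<lambda>e. if sim i e e0 then a else \<^bold>\<bottom>"
  have D: "?D \<in> E \<rightarrow> carrier" using a by simp
  have "prod_dia i ?D e = ?D e" if e: "e \<in> E" for e
  proof (rule le_antisym)
    show "prod_dia i ?D e \<preceq> ?D e"
    proof (rule prod_dia_least[OF D e])
      fix e' assume e': "e' \<in> E" "sim i e' e"
      have "sim i e' e0 \<longleftrightarrow> sim i e e0"
        using sim_trans[OF e e'(1) e0 sim_sym[OF e'(1) e e'(2)]] sim_trans[OF e'(1) e e0 e'(2)]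
        by blast
      then show "dia i (?D e') \<preceq> ?D e"
        using a by simp
    qed (use a in simp)
    show "?D e \<preceq> prod_dia i ?D e"
      using prod_le_dia[OF D e] .
  qed (use a prod_dia_closed e in simp_all)
  then show "hdia A' i D = D"
    unfolding D_def inter_alg_simps by (intro restrict_ext) simp
  show "D \<in> hcar A'"
    using a by (simp add: D_def inter_alg_simps)
qed

text \<open>An \<open>i\<close>-minimal element of the product is concentrated on a single \<open>\<sim>\<^sub>i\<close>-class,
  where it is constantly an \<open>i\<close>-minimal element of \<open>A\<close>: otherwise the indicator of that class
  with a smaller value would be a smaller \<open>\<diamond>'\<^sub>i\<close>-closed element.\<close>

lemma i_minimal_inter_alg_component:
  assumes H: "H \<in> Min_i A' i" and e0: "e0 \<in> E" "H e0 \<noteq> \<^bold>\<bottom>"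
  shows "H e0 \<in> Min_i A i"
proof -
  note H_props = A'.i_minimalD(1,3,4)[OF H]
  have H_Pi: "H \<in> E \<rightarrow> carrier" using inter_alg_carrier_Pi[OF H_props(1)] .
  have "dia i (H e0) = H e0"
    using prod_dia_dia_closed[OF H_Pi e0(1), of i] inter_alg_dia_fixed[OF H_props(1,2) e0(1)] by simp
  then obtain a where a: "a \<in> Min_i A i" "a \<preceq> H e0"
    using exists_i_minimal_below H_Pi e0 by blast
  note a_props = i_minimalD[OF a(1)]
  define D where "D = restrict (\<lambda>e. if sim i e e0 then a else \<^bold>\<bottom>) E"
  note D = class_indicator[OF a_props(1,3) e0(1), folded D_def]
  have "hle A' D H"
    using inter_alg_dia_fixed_sim[OF H_props(1,2) _ e0(1)] H_Pi a by (simp add: D_def inter_alg_simps)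
  moreover have "D e0 \<noteq> hbot A' e0"
    using e0 sim_refl[OF e0(1)] a_props by (simp add: D_def inter_alg_simps)
  then have "D \<noteq> hbot A'"
    by metis
  ultimately have "D = H"
    using H_props(3)[OF D(1) _ D(2)] unfolding hlt_def by blast
  then show ?thesis
    using a(1) e0(1) sim_refl[OF e0(1)] by (auto simp: D_def)
qed

lemma i_minimal_inter_alg_below:
  assumes H: "H \<in> Min_i A' i" and e: "e \<in> E"
  shows "\<exists>t\<in>Min_i A i. H e \<preceq> t"
proof (cases "H e = \<^bold>\<bottom>")
  case False
  then show ?thesis
    using i_minimal_inter_alg_component[OF H e] i_minimalD le_refl by blast
next
  case True
  have H_props: "H \<noteq> restrict (\<lambda>e. \<^bold>\<bottom>) E" "H \<in> PiE E (\<lambda>_. carrier)"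
    using A'.i_minimalD(1,2)[OF H] by (simp_all add: inter_alg_simps)
  obtain e1 where "e1 \<in> E" "H e1 \<noteq> \<^bold>\<bottom>"
  proof (rule ccontr)
    assume "\<not> thesis"
    with that have "H = restrict (\<lambda>e. \<^bold>\<bottom>) E"
      by (intro PiE_ext[OF H_props(2)]) auto
    with H_props(1) show False ..
  qed
  then have "H e1 \<in> Min_i A i"
    by (rule i_minimal_inter_alg_component[OF H])
  then show ?thesis
    using True i_minimalD by auto
qed

end

section \<open>Pseudo-quotients\<close>

locale pseudo_quotient = epistemic_heyting +
  fixes c :: 'a
  assumes c_closed [simp]: "c \<in> carrier"
begin

abbreviation Q where "Q \<equiv> pquot A c"
abbreviation cls where "cls \<equiv> pq_cls A c"

text \<open>Independent of the chosen representative, since the classes are the fibres of \<open>_ \<^bold>\<sqinter> c\<close>.\<close>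

definition canon :: "'a set \<Rightarrow> 'a" where
  "canon X = pq_rep X \<^bold>\<sqinter> c"

lemma cls_self: "x \<in> carrier \<Longrightarrow> x \<in> cls x"
  unfolding pq_cls_def by simp

lemma rep_in_cls: "x \<in> carrier \<Longrightarrow> pq_rep (cls x) \<in> cls x"
  unfolding pq_rep_def using cls_self by (rule someI)

lemma canon_cls [simp]: "x \<in> carrier \<Longrightarrow> canon (cls x) = x \<^bold>\<sqinter> c"
  using rep_in_cls unfolding canon_def pq_cls_def by blast

lemma rep_cls_closed: "x \<in> carrier \<Longrightarrow> pq_rep (cls x) \<in> carrier"
  using rep_in_cls unfolding pq_cls_def by blast

lemma pquot_carrier: "hcar Q = cls ` carrier"
  unfolding pquot_def by simp

lemma cls_eq_iff: "x \<in> carrier \<Longrightarrow> y \<in> carrier \<Longrightarrow> cls x = cls y \<longleftrightarrow> x \<^bold>\<sqinter> c = y \<^bold>\<sqinter> c"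
proof
  assume "x \<in> carrier" "cls x = cls y"
  then have "x \<in> cls y" using cls_self by metis
  then show "x \<^bold>\<sqinter> c = y \<^bold>\<sqinter> c" unfolding pq_cls_def by simp
qed (auto simp: pq_cls_def)

lemma pquot_carrierD:
  assumes "X \<in> hcar Q"
  shows "pq_rep X \<in> carrier" "X = cls (pq_rep X)"
proof -
  obtain x where x: "x \<in> carrier" "X = cls x" using assms pquot_carrier by auto
  then show "pq_rep X \<in> carrier" using rep_cls_closed by simp
  moreover have "pq_rep X \<^bold>\<sqinter> c = x \<^bold>\<sqinter> c" using canon_cls x unfolding canon_def by simp
  ultimately show "X = cls (pq_rep X)" using x cls_eq_iff by simp
qed

lemma cls_closed [simp]: "x \<in> carrier \<Longrightarrow> cls x \<in> hcar Q"
  using pquot_carrier by simp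

lemma canon_closed [simp]: "X \<in> hcar Q \<Longrightarrow> canon X \<in> carrier"
  and canon_le_c [simp]: "X \<in> hcar Q \<Longrightarrow> canon X \<preceq> c"
  and canon_meet_c [simp]: "X \<in> hcar Q \<Longrightarrow> canon X \<^bold>\<sqinter> c = canon X"
  using pquot_carrierD[of X] meet_absorb1[of "canon X" c] unfolding canon_def by simp_all

lemma canon_in_class:
  assumes "X \<in> hcar Q"
  shows "canon X \<in> X"
proof -
  have "canon X \<in> cls (pq_rep X)"
    using canon_closed[OF assms] canon_meet_c[OF assms] unfolding pq_cls_def by (simp add: canon_def)
  then show ?thesis
    using pquot_carrierD(2)[OF assms] by simp
qed

lemma pquot_eq_iff: "X \<in> hcar Q \<Longrightarrow> Y \<in> hcar Q \<Longrightarrow> X = Y \<longleftrightarrow> canon X = canon Y"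
  using pquot_carrierD cls_eq_iff unfolding canon_def by metis

lemma pquot_le_iff: "hle Q X Y \<longleftrightarrow> canon X \<preceq> canon Y"
  unfolding pquot_def canon_def by simp

lemma pquot_simps:
  "hmeet Q X Y = cls (pq_rep X \<^bold>\<sqinter> pq_rep Y)"
  "hjoin Q X Y = cls (pq_rep X \<^bold>\<squnion> pq_rep Y)"
  "himp Q X Y = cls (pq_rep X \<^bold>\<rightarrow> pq_rep Y)"
  "hbot Q = cls \<^bold>\<bottom>" "htop Q = cls \<^bold>\<top>"
  "hdia Q i X = cls (dia i (pq_rep X \<^bold>\<sqinter> c))"
  "hbox Q i X = cls (box i (c \<^bold>\<rightarrow> pq_rep X))"
  unfolding pquot_def by simp_all

lemma pquot_closed [simp]:
  "X \<in> hcar Q \<Longrightarrow> Y \<in> hcar Q \<Longrightarrow> hmeet Q X Y \<in> hcar Q"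
  "X \<in> hcar Q \<Longrightarrow> Y \<in> hcar Q \<Longrightarrow> hjoin Q X Y \<in> hcar Q"
  "X \<in> hcar Q \<Longrightarrow> Y \<in> hcar Q \<Longrightarrow> himp Q X Y \<in> hcar Q"
  "hbot Q \<in> hcar Q" "htop Q \<in> hcar Q"
  "X \<in> hcar Q \<Longrightarrow> hdia Q i X \<in> hcar Q"
  "X \<in> hcar Q \<Longrightarrow> hbox Q i X \<in> hcar Q"
  unfolding pquot_simps using pquot_carrierD by simp_all

lemma imp_c_meet:
  assumes "a \<in> carrier"
  shows "c \<^bold>\<rightarrow> a \<^bold>\<sqinter> c = c \<^bold>\<rightarrow> a"
proof (rule imp_cong_meet)
  show "c \<^bold>\<sqinter> (a \<^bold>\<sqinter> c) = c \<^bold>\<sqinter> a"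
    using assms by (intro le_antisym) (simp_all add: meet_le1I meet_le2I)
qed (use assms in simp_all)

lemma canon_bottom [simp]: "canon (hbot Q) = \<^bold>\<bottom>"
  and canon_top [simp]: "canon (htop Q) = c"
  by (simp_all add: pquot_simps)

lemma canon_dia [simp]: "X \<in> hcar Q \<Longrightarrow> canon (hdia Q i X) = dia i (canon X) \<^bold>\<sqinter> c"
  using pquot_carrierD[of X] by (simp add: pquot_simps canon_def[of X])

lemma canon_box [simp]: "X \<in> hcar Q \<Longrightarrow> canon (hbox Q i X) = box i (c \<^bold>\<rightarrow> canon X) \<^bold>\<sqinter> c"
  using pquot_carrierD[of X] imp_c_meet[of "pq_rep X"] by (simp add: pquot_simps canon_def[of X])

context
  fixes X Y assumes X: "X \<in> hcar Q" and Y: "Y \<in> hcar Q"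
begin

lemma canon_meet [simp]: "canon (hmeet Q X Y) = canon X \<^bold>\<sqinter> canon Y"
  using pquot_carrierD[OF X] pquot_carrierD[OF Y]
  by (simp add: pquot_simps canon_def[of X] canon_def[of Y] meet_meet_distrib[of "pq_rep X" "pq_rep Y" c])

lemma canon_join [simp]: "canon (hjoin Q X Y) = canon X \<^bold>\<squnion> canon Y"
  using pquot_carrierD[OF X] pquot_carrierD[OF Y]
  by (simp add: pquot_simps canon_def[of X] canon_def[of Y] join_meet_distrib[of c "pq_rep X" "pq_rep Y"])

lemma canon_imp [simp]: "canon (himp Q X Y) = (canon X \<^bold>\<rightarrow> canon Y) \<^bold>\<sqinter> c"
  using pquot_carrierD[OF X] pquot_carrierD[OF Y]
  by (simp add: pquot_simps canon_def[of X] canon_def[of Y] imp_meet_right[of "pq_rep X" "pq_rep Y" c])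

end

lemma heyting_pquot: "heyting_algebra Q"
  unfolding heyting_algebra_def pquot_le_iff
proof (intro conjI ballI impI pquot_closed)
  fix X Y assume "X \<in> hcar Q" "Y \<in> hcar Q" "canon X \<preceq> canon Y \<and> canon Y \<preceq> canon X"
  then show "X = Y" using pquot_eq_iff le_antisym by simp
next
  fix X Y Z assume "X \<in> hcar Q" "Y \<in> hcar Q" "Z \<in> hcar Q" "canon X \<preceq> canon Y \<and> canon Y \<preceq> canon Z"
  then show "canon X \<preceq> canon Z" using le_trans by (meson canon_closed)
next
  fix X Y Z assume "X \<in> hcar Q" "Y \<in> hcar Q" "Z \<in> hcar Q"
  then show "canon (hmeet Q Z X) \<preceq> canon Y \<longleftrightarrow> canon Z \<preceq> canon (himp Q X Y)"
    by (simp add: le_imp_iff)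
qed simp_all

context
  fixes X assumes X [simp]: "X \<in> hcar Q"
begin

lemma pquot_le_dia: "hle Q X (hdia Q i X)"
  using le_dia[of "canon X" i] by (simp add: pquot_le_iff)

lemma pquot_box_le: "hle Q (hbox Q i X) X"
proof -
  have "box i (c \<^bold>\<rightarrow> canon X) \<^bold>\<sqinter> c \<preceq> (c \<^bold>\<rightarrow> canon X) \<^bold>\<sqinter> c"
    using box_le[of "c \<^bold>\<rightarrow> canon X" i] by (simp add: meet_le1I)
  then show ?thesis
    using le_trans[OF _ imp_mp[of c "canon X"]] by (simp add: pquot_le_iff)
qed

lemma pquot_dia_le_box_dia: "hle Q (hdia Q i X) (hbox Q i (hdia Q i X))"
proof -
  have "dia i (canon X) \<preceq> c \<^bold>\<rightarrow> dia i (canon X)"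
    using le_imp_iff by simp
  then have "box i (dia i (canon X)) \<preceq> box i (c \<^bold>\<rightarrow> dia i (canon X))"
    using box_mono by simp
  then have "dia i (canon X) \<preceq> box i (c \<^bold>\<rightarrow> dia i (canon X))"
    using le_trans[OF dia_le_box_dia[of "canon X" i]] by simp
  then have "dia i (canon X) \<^bold>\<sqinter> c \<preceq> box i (c \<^bold>\<rightarrow> dia i (canon X)) \<^bold>\<sqinter> c"
    by (simp add: meet_le1I)
  then show ?thesis
    using imp_c_meet[of "dia i (canon X)"] by (simp add: pquot_le_iff)
qed

lemma pquot_dia_box_le_box: "hle Q (hdia Q i (hbox Q i X)) (hbox Q i X)"
proof -
  let ?s = "box i (c \<^bold>\<rightarrow> canon X)"
  have s: "?s \<in> carrier" by simp
  have "dia i (?s \<^bold>\<sqinter> c) \<preceq> dia i ?s"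
    using dia_mono s by simp
  then have "dia i (?s \<^bold>\<sqinter> c) \<preceq> ?s"
    using le_trans[OF _ dia_box_le_box[of "c \<^bold>\<rightarrow> canon X" i]] s by simp
  then show ?thesis
    using s by (simp add: pquot_le_iff meet_le1I)
qed

end

context
  fixes X Y assumes X [simp]: "X \<in> hcar Q" and Y [simp]: "Y \<in> hcar Q"
begin

lemma pquot_dia_mono: "hle Q X Y \<Longrightarrow> hle Q (hdia Q i X) (hdia Q i Y)"
  using dia_mono[of "canon X" "canon Y" i] by (simp add: pquot_le_iff meet_le1I)

lemma pquot_box_mono: "hle Q X Y \<Longrightarrow> hle Q (hbox Q i X) (hbox Q i Y)"
  using box_mono[of "c \<^bold>\<rightarrow> canon X" "c \<^bold>\<rightarrow> canon Y" i] imp_mono2[of "canon X" "canon Y" c]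
  by (simp add: pquot_le_iff meet_le1I)

lemma pquot_dia_join_le: "hle Q (hdia Q i (hjoin Q X Y)) (hjoin Q (hdia Q i X) (hdia Q i Y))"
proof -
  have "dia i (canon X \<^bold>\<squnion> canon Y) \<^bold>\<sqinter> c \<preceq> (dia i (canon X) \<^bold>\<squnion> dia i (canon Y)) \<^bold>\<sqinter> c"
    using dia_join_le[of "canon X" "canon Y" i] by (simp add: meet_le1I)
  then show ?thesis
    by (simp add: pquot_le_iff join_meet_distrib)
qed

lemma pquot_box_imp_le: "hle Q (hbox Q i (himp Q X Y)) (himp Q (hbox Q i X) (hbox Q i Y))"
proof -
  let ?u = "box i (c \<^bold>\<rightarrow> canon X \<^bold>\<rightarrow> canon Y)" and ?s = "box i (c \<^bold>\<rightarrow> canon X)" and ?t = "box i (c \<^bold>\<rightarrow> canon Y)"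
  have u: "?u \<in> carrier" "?s \<in> carrier" "?t \<in> carrier"
    by simp_all
  have "?u \<preceq> box i ((c \<^bold>\<rightarrow> canon X) \<^bold>\<rightarrow> c \<^bold>\<rightarrow> canon Y)"
    using box_mono imp_imp_le by simp
  then have "?u \<^bold>\<sqinter> ?s \<preceq> box i ((c \<^bold>\<rightarrow> canon X) \<^bold>\<rightarrow> c \<^bold>\<rightarrow> canon Y) \<^bold>\<sqinter> ?s"
    using u by (simp add: meet_le1I)
  then have "?u \<^bold>\<sqinter> ?s \<preceq> ?t"
    using le_trans[OF _ box_mp[of "c \<^bold>\<rightarrow> canon X" "c \<^bold>\<rightarrow> canon Y" i]] u by simp
  then have "?u \<^bold>\<sqinter> c \<^bold>\<sqinter> (?s \<^bold>\<sqinter> c) \<preceq> ?t \<^bold>\<sqinter> c"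
    using u le_trans[OF meet_mono[OF meet_le1 meet_le1]] by (simp add: meet_le2I)
  then have "?u \<^bold>\<sqinter> c \<preceq> (?s \<^bold>\<sqinter> c \<^bold>\<rightarrow> ?t \<^bold>\<sqinter> c) \<^bold>\<sqinter> c"
    using u le_imp_iff by simp
  then show ?thesis
    using imp_c_meet[of "canon X \<^bold>\<rightarrow> canon Y"] by (simp add: pquot_le_iff)
qed

lemma pquot_box_imp_le_dia_imp: "hle Q (hbox Q i (himp Q X Y)) (himp Q (hdia Q i X) (hdia Q i Y))"
proof -
  let ?p = "c \<^bold>\<rightarrow> canon X \<^bold>\<rightarrow> canon Y"
  have p: "?p \<in> carrier" by simp
  have "?p \<^bold>\<sqinter> canon X \<preceq> ?p \<^bold>\<sqinter> c \<^bold>\<sqinter> canon X"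
    using p le_trans[OF meet_le2 canon_le_c] by simp
  moreover have "?p \<^bold>\<sqinter> c \<^bold>\<sqinter> canon X \<preceq> (canon X \<^bold>\<rightarrow> canon Y) \<^bold>\<sqinter> canon X"
    using p imp_mp[of c "canon X \<^bold>\<rightarrow> canon Y"] by (simp add: meet_le1I)
  ultimately have "?p \<^bold>\<sqinter> canon X \<preceq> canon Y"
    using le_trans[OF _ imp_mp[of "canon X" "canon Y"]] le_trans[of "?p \<^bold>\<sqinter> canon X" "?p \<^bold>\<sqinter> c \<^bold>\<sqinter> canon X"] p by simp
  then have "box i ?p \<preceq> box i (canon X \<^bold>\<rightarrow> canon Y)"
    using box_mono p le_imp_iff by simp
  then have "box i ?p \<preceq> dia i (canon X) \<^bold>\<rightarrow> dia i (canon Y)"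
    using le_trans[OF _ box_imp_le_dia_imp[of "canon X" "canon Y" i]] p by simp
  then have "box i ?p \<^bold>\<sqinter> dia i (canon X) \<preceq> dia i (canon Y)"
    using le_imp_iff p by simp
  then have "box i ?p \<^bold>\<sqinter> c \<^bold>\<sqinter> (dia i (canon X) \<^bold>\<sqinter> c) \<preceq> dia i (canon Y) \<^bold>\<sqinter> c"
    using p le_trans[OF meet_mono[OF meet_le1 meet_le1]] by (simp add: meet_le2I)
  then have "box i ?p \<^bold>\<sqinter> c \<preceq> (dia i (canon X) \<^bold>\<sqinter> c \<^bold>\<rightarrow> dia i (canon Y) \<^bold>\<sqinter> c) \<^bold>\<sqinter> c"
    using p le_imp_iff by simp
  then show ?thesis
    using imp_c_meet[of "canon X \<^bold>\<rightarrow> canon Y"] by (simp add: pquot_le_iff)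
qed

end

lemma pquot_dia_bottom_le: "hle Q (hdia Q i (hbot Q)) (hbot Q)"
  by (simp add: pquot_le_iff)

lemma pquot_top_le_box_top: "hle Q (htop Q) (hbox Q i (htop Q))"
  by (simp add: pquot_le_iff imp_self)

lemma monadic_pquot: "monadic_heyting_algebra Q"
  unfolding monadic_heyting_algebra_def
  by (intro conjI heyting_pquot allI ballI impI pquot_closed pquot_dia_mono pquot_box_mono
      pquot_le_dia pquot_box_le pquot_dia_join_le pquot_box_imp_le pquot_dia_le_box_dia
      pquot_dia_box_le_box pquot_box_imp_le_dia_imp pquot_dia_bottom_le pquot_top_le_box_top)

text \<open>The excluded middle for \<open>\<diamond>\<^sub>i\<close>-elements of the quotient comes from splitting \<open>c\<close>
  along \<open>\<diamond>\<^sub>i a \<^bold>\<squnion> (\<diamond>\<^sub>i a \<^bold>\<rightarrow> \<^bold>\<bottom>) = \<^bold>\<top>\<close>.\<close>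

lemma epistemic_pquot: "epistemic_heyting_algebra Q"
  unfolding epistemic_heyting_algebra_def
proof (intro conjI monadic_pquot allI ballI)
  show "finite (hcar Q)" using finite_carrier pquot_carrier by simp
next
  fix i X assume X: "X \<in> hcar Q"
  let ?a = "canon X"
  let ?d = "dia i ?a \<^bold>\<sqinter> c" and ?n = "dia i ?a \<^bold>\<rightarrow> \<^bold>\<bottom>"
  have a: "?a \<in> carrier" "?d \<in> carrier" "?n \<in> carrier" using X by simp_all
  have "c = c \<^bold>\<sqinter> (dia i ?a \<^bold>\<squnion> ?n)"
    using dia_excluded_middle a by simp
  also have "\<dots> = ?d \<^bold>\<squnion> ?n \<^bold>\<sqinter> c"
    using meet_join_distrib meet_comm a by simp
  finally have c_split: "c = ?d \<^bold>\<squnion> ?n \<^bold>\<sqinter> c" .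
  have "?n \<^bold>\<sqinter> ?d \<preceq> ?n \<^bold>\<sqinter> dia i ?a"
    using a by (simp add: meet_le2I)
  then have "?n \<^bold>\<sqinter> ?d = \<^bold>\<bottom>"
    using le_trans[OF _ imp_mp[of "dia i ?a" "\<^bold>\<bottom>"]] a le_bottom_iff by simp
  moreover have "?n \<^bold>\<sqinter> c \<^bold>\<sqinter> ?d \<preceq> ?n \<^bold>\<sqinter> ?d"
    using meet_mono[OF meet_le1[of ?n c] le_refl[of ?d]] a by simp
  ultimately have "?n \<^bold>\<sqinter> c \<preceq> ?d \<^bold>\<rightarrow> \<^bold>\<bottom>"
    using a le_neg_iff le_bottom_iff by simp
  then have "?n \<^bold>\<sqinter> c \<preceq> (?d \<^bold>\<rightarrow> \<^bold>\<bottom>) \<^bold>\<sqinter> c"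
    using a by simp
  then have "?d \<^bold>\<squnion> ?n \<^bold>\<sqinter> c \<preceq> ?d \<^bold>\<squnion> (?d \<^bold>\<rightarrow> \<^bold>\<bottom>) \<^bold>\<sqinter> c"
    using join_mono[OF le_refl] a by simp
  then have "c \<preceq> ?d \<^bold>\<squnion> (?d \<^bold>\<rightarrow> \<^bold>\<bottom>) \<^bold>\<sqinter> c"
    by (simp only: c_split[symmetric])
  then have "canon (hjoin Q (hdia Q i X) (hneg Q (hdia Q i X))) = canon (htop Q)"
    unfolding hneg_def using X a le_antisym by simp
  then show "hjoin Q (hdia Q i X) (hneg Q (hdia Q i X)) = htop Q"
    using pquot_eq_iff X unfolding hneg_def by simp
qed

lemma i_minimal_pquot_lift:
  assumes F: "F \<in> Min_i Q i"
  shows "\<exists>H\<in>Min_i A i. canon F = H \<^bold>\<sqinter> c"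
proof -
  interpret Q: monadic_heyting Q
    using heyting_pquot monadic_pquot by unfold_locales
  note F_props = Q.i_minimalD[OF F]
  let ?f = "canon F"
  have f: "?f \<in> carrier" "dia i ?f \<^bold>\<sqinter> c = ?f"
    using F_props(1,3) canon_dia[OF F_props(1), of i] by simp_all
  have "?f \<noteq> \<^bold>\<bottom>"
    using F_props(1,2) pquot_eq_iff[of F "hbot Q"] by simp
  then obtain H where H: "H \<in> Min_i A i" "H \<preceq> dia i ?f" "H \<^bold>\<sqinter> c \<noteq> \<^bold>\<bottom>"
    using exists_i_minimal_meeting_below[OF c_closed, of "dia i ?f" i] f by auto
  note H_props = i_minimalD[OF H(1)]
  let ?D = "cls H"
  have D: "?D \<in> hcar Q" "canon ?D = H \<^bold>\<sqinter> c"
    using H_props by simp_all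
  have "?D \<noteq> hbot Q"
    using D H(3) pquot_eq_iff[of ?D "hbot Q"] by simp
  moreover have "dia i (H \<^bold>\<sqinter> c) \<preceq> H"
    using dia_mono[of "H \<^bold>\<sqinter> c" H i] H_props by simp
  then have "dia i (H \<^bold>\<sqinter> c) \<^bold>\<sqinter> c = H \<^bold>\<sqinter> c"
    using H_props le_dia[of "H \<^bold>\<sqinter> c" i] by (intro le_antisym) (simp_all add: meet_le1I)
  then have "hdia Q i ?D = ?D"
    using D pquot_eq_iff[of "hdia Q i ?D" ?D] by simp
  moreover have "H \<^bold>\<sqinter> c \<preceq> ?f"
    using meet_mono[OF H(2) le_refl[OF c_closed]] H_props f by simp
  then have "hle Q ?D F"
    using D by (simp add: pquot_le_iff)
  ultimately have "?D = F"
    using F_props(4)[OF D(1)] unfolding hlt_def by blast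
  then show ?thesis
    using D(2) H(1) by auto
qed

end

section \<open>Measures and the weights of preconditions\<close>

locale ape_structure = epistemic_heyting +
  fixes \<mu>
  assumes i_measure: "i_measure A i (\<mu> i)"
begin

abbreviation m where "m i x \<equiv> the (\<mu> i x)"

lemma Min_downI: "t \<in> Min_i A i \<Longrightarrow> x \<in> carrier \<Longrightarrow> x \<preceq> t \<Longrightarrow> x \<in> Min_down A i"
  unfolding Min_down_def by blast

lemma i_premeasure: "i_premeasure A i (\<mu> i)"
  using i_measure unfolding i_measure_def by blast

lemma dom_measure: "dom (\<mu> i) = Min_down A i"
  using i_premeasure[of i] unfolding i_premeasure_def by (elim conjE) simp

lemma measure_mono: "x \<in> Min_down A i \<Longrightarrow> y \<in> Min_down A i \<Longrightarrow> x \<preceq> y \<Longrightarrow> m i x \<le> m i y"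
  using i_premeasure[of i] dom_measure[of i] unfolding i_premeasure_def by (elim conjE) simp

lemma measure_modular:
  "t \<in> Min_i A i \<Longrightarrow> x \<in> carrier \<Longrightarrow> y \<in> carrier \<Longrightarrow> x \<preceq> t \<Longrightarrow> y \<preceq> t
   \<Longrightarrow> m i (x \<^bold>\<squnion> y) = m i x + m i y - m i (x \<^bold>\<sqinter> y)"
  using i_premeasure[of i] unfolding i_premeasure_def by (elim conjE) simp

lemma measure_strict_mono:
  "t \<in> Min_i A i \<Longrightarrow> x \<in> carrier \<Longrightarrow> y \<in> carrier \<Longrightarrow> x \<prec> y \<Longrightarrow> y \<preceq> t \<Longrightarrow> m i x < m i y"
  using i_measure[of i] unfolding i_measure_def by (elim conjE) simp

lemma measure_bottom:
  assumes "t \<in> Min_i A i"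
  shows "m i \<^bold>\<bottom> = 0"
proof -
  have "t \<in> dom (\<mu> i)"
    using assms Min_downI i_minimal_closed dom_measure by simp
  then show ?thesis
    using i_measure[of i] unfolding i_measure_def i_premeasure_def by auto
qed

lemma measure_meet_join_disjoint:
  assumes t: "t \<in> Min_i A i" and w: "w \<in> carrier" "w \<preceq> t"
    and z: "z \<in> carrier" "z' \<in> carrier" "z \<^bold>\<sqinter> z' = \<^bold>\<bottom>"
  shows "m i (w \<^bold>\<sqinter> (z \<^bold>\<squnion> z')) = m i (w \<^bold>\<sqinter> z) + m i (w \<^bold>\<sqinter> z')"
proof -
  have tC: "t \<in> carrier" using i_minimal_closed[OF t] .
  have below: "w \<^bold>\<sqinter> z \<preceq> t" "w \<^bold>\<sqinter> z' \<preceq> t"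
    using le_trans[OF meet_le1 w(2)] w z tC by simp_all
  have "w \<^bold>\<sqinter> z \<^bold>\<sqinter> (w \<^bold>\<sqinter> z') \<preceq> z \<^bold>\<sqinter> z'"
    using w z meet_mono[OF meet_le2[of w z] meet_le2[of w z']] by simp
  then have "w \<^bold>\<sqinter> z \<^bold>\<sqinter> (w \<^bold>\<sqinter> z') = \<^bold>\<bottom>"
    using w z le_bottom_iff by simp
  moreover have "w \<^bold>\<sqinter> (z \<^bold>\<squnion> z') = w \<^bold>\<sqinter> z \<^bold>\<squnion> w \<^bold>\<sqinter> z'"
    using meet_join_distrib w z by simp
  ultimately show ?thesis
    using measure_modular[OF t _ _ below] measure_bottom[OF t] w z by simp
qed

lemma measure_meet_bigjoin:
  assumes t: "t \<in> Min_i A i" and w: "w \<in> carrier" "w \<preceq> t"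
    and Q: "finite Q" "\<forall>q\<in>Q. b q \<in> carrier"
    and disjoint: "\<forall>q\<in>Q. \<forall>q'\<in>Q. q \<noteq> q' \<longrightarrow> b q \<^bold>\<sqinter> b q' = \<^bold>\<bottom>"
  shows "(\<Sum>q\<in>Q. m i (w \<^bold>\<sqinter> b q)) = m i (w \<^bold>\<sqinter> bigjoin A (b ` Q))"
  using Q disjoint
proof (induction Q rule: finite_induct)
  case empty
  then show ?case using measure_bottom[OF t] w by (simp add: bigjoin_empty)
next
  case (insert q Q)
  let ?J = "bigjoin A (b ` Q)"
  have bQ: "finite (b ` Q)" "b ` Q \<subseteq> carrier" "b q \<in> carrier"
    using insert by auto
  have "\<forall>s\<in>b ` Q. s \<^bold>\<sqinter> b q = \<^bold>\<bottom>"
    using insert.prems(2) insert.hyps(2) by fastforce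
  then have "?J \<^bold>\<sqinter> b q = \<^bold>\<bottom>"
    using meet_bigjoin_eq_bottom bQ by simp
  then have "b q \<^bold>\<sqinter> ?J = \<^bold>\<bottom>"
    using meet_comm bQ bigjoin_closed by simp
  then have "m i (w \<^bold>\<sqinter> (b q \<^bold>\<squnion> ?J)) = m i (w \<^bold>\<sqinter> b q) + m i (w \<^bold>\<sqinter> ?J)"
    using measure_meet_join_disjoint[OF t w] bQ bigjoin_closed by simp
  moreover have "(\<Sum>q\<in>insert q Q. m i (w \<^bold>\<sqinter> b q)) = m i (w \<^bold>\<sqinter> b q) + m i (w \<^bold>\<sqinter> ?J)"
    using insert by simp
  ultimately show ?case
    using bigjoin_insert bQ by simp
qed

lemma measure_meet_increment_mono:
  assumes t: "t \<in> Min_i A i" and C: "x \<in> carrier" "y \<in> carrier" "z \<in> carrier" "z' \<in> carrier"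
    and le: "x \<preceq> y" "y \<preceq> t" "z \<preceq> z'"
  shows "m i (y \<^bold>\<sqinter> z) - m i (x \<^bold>\<sqinter> z) \<le> m i (y \<^bold>\<sqinter> z') - m i (x \<^bold>\<sqinter> z')"
proof -
  have T: "t \<in> carrier" using i_minimal_closed[OF t] .
  let ?u = "x \<^bold>\<sqinter> z'" and ?v = "y \<^bold>\<sqinter> z"
  have uv: "?u \<in> carrier" "?v \<in> carrier" "?u \<preceq> t" "?v \<preceq> t"
    using C T le le_trans[OF meet_le1[of x z'] le_trans[OF le(1,2)]] le_trans[OF meet_le1[of y z] le(2)]
    by simp_all
  have "?u \<^bold>\<sqinter> ?v = x \<^bold>\<sqinter> z"
  proof (rule le_antisym)
    show "?u \<^bold>\<sqinter> ?v \<preceq> x \<^bold>\<sqinter> z"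
      using C meet_mono[OF meet_le1[of x z'] meet_le2[of y z]] by simp
    show "x \<^bold>\<sqinter> z \<preceq> ?u \<^bold>\<sqinter> ?v"
      using C le meet_mono[of x x z z'] meet_mono[of x y z z] by simp
  qed (use C in simp_all)
  moreover have "?u \<^bold>\<squnion> ?v \<preceq> y \<^bold>\<sqinter> z'"
    using C le meet_mono[of x y z' z'] meet_mono[of y y z z'] by simp
  then have "m i (?u \<^bold>\<squnion> ?v) \<le> m i (y \<^bold>\<sqinter> z')"
    using measure_mono Min_downI[OF t] C uv le_trans[OF meet_le1[of y z'] le(2)] T
    by (meson join_closed join_le_iff meet_closed)
  ultimately show ?thesis
    using measure_modular[OF t uv] by simp
qed

lemma measure_meet_modular:
  assumes t: "t \<in> Min_i A i" and C: "x \<in> carrier" "y \<in> carrier" "z \<in> carrier"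
    and le: "x \<preceq> t" "y \<preceq> t"
  shows "m i ((x \<^bold>\<squnion> y) \<^bold>\<sqinter> z) = m i (x \<^bold>\<sqinter> z) + m i (y \<^bold>\<sqinter> z) - m i (x \<^bold>\<sqinter> y \<^bold>\<sqinter> z)"
proof -
  have T: "t \<in> carrier" using i_minimal_closed[OF t] .
  have "x \<^bold>\<sqinter> z \<preceq> t" "y \<^bold>\<sqinter> z \<preceq> t"
    using C T le_trans[OF meet_le1[of x z] le(1)] le_trans[OF meet_le1[of y z] le(2)] by simp_all
  then show ?thesis
    using measure_modular[OF t, of "x \<^bold>\<sqinter> z" "y \<^bold>\<sqinter> z"] C
    by (simp add: join_meet_distrib meet_meet_distrib[of x y z])
qed

end

locale preordered_multiset = heyting +
  fixes \<Phi> :: "('a \<times> nat) set"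
  assumes finite_\<Phi>: "finite \<Phi>"
    and \<Phi>_closed: "p \<in> \<Phi> \<Longrightarrow> fst p \<in> carrier"
    and \<Phi>_comparable: "p \<in> \<Phi> \<Longrightarrow> q \<in> \<Phi> \<Longrightarrow> fst p \<noteq> fst q
      \<Longrightarrow> fst p \<^bold>\<sqinter> fst q = \<^bold>\<bottom> \<or> fst p \<prec> fst q \<or> fst q \<prec> fst p"
begin

lemma phi_less_irrefl: "\<not> phi_less A p p"
  unfolding phi_less_def hlt_def by simp

lemma phi_less_le: "p \<in> \<Phi> \<Longrightarrow> phi_less A q p \<Longrightarrow> fst q \<preceq> fst p"
  using \<Phi>_closed[of p] unfolding phi_less_def hlt_def by (auto simp del: prod.collapse)

lemma phi_less_trans:
  assumes pqr: "p \<in> \<Phi>" "q \<in> \<Phi>" "r \<in> \<Phi>" and "phi_less A p q" "phi_less A q r"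
  shows "phi_less A p r"
proof -
  have C: "fst p \<in> carrier" "fst q \<in> carrier" "fst r \<in> carrier"
    using pqr \<Phi>_closed by auto
  consider (strict) "fst p \<prec> fst q" "fst q \<prec> fst r"
    | (left) "fst p \<prec> fst q" "fst q = fst r"
    | (right) "fst p = fst q" "snd p < snd q"
    using assms unfolding phi_less_def by blast
  then show ?thesis
  proof cases
    case strict
    then have "fst p \<preceq> fst r"
      using le_trans[of "fst p" "fst q" "fst r"] C unfolding hlt_def by simp
    moreover have "fst p \<noteq> fst r"
      using strict le_antisym[of "fst q" "fst p"] C unfolding hlt_def by auto
    ultimately show ?thesis unfolding phi_less_def hlt_def by simp
  qed (use assms in \<open>auto simp: phi_less_def\<close>)
qed

lemma mb_subset: "mb A \<Phi> p \<subseteq> \<Phi>"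
  and mb_less: "q \<in> mb A \<Phi> p \<Longrightarrow> phi_less A q p"
  unfolding mb_def by blast+

lemma finite_mb: "finite (mb A \<Phi> p)"
  using finite_subset[OF mb_subset finite_\<Phi>] .

lemma mb_closed: "q \<in> mb A \<Phi> p \<Longrightarrow> fst q \<in> carrier"
  using mb_subset \<Phi>_closed by blast

lemma mb_le: "p \<in> \<Phi> \<Longrightarrow> q \<in> mb A \<Phi> p \<Longrightarrow> fst q \<preceq> fst p"
  using phi_less_le mb_less by blast

text \<open>Distinct maximal elements below \<open>p\<close> are incomparable, hence disjoint by the
  comparability assumption on \<open>\<Phi>\<close>.\<close>

lemma mb_disjoint:
  assumes q: "q \<in> mb A \<Phi> p" "q' \<in> mb A \<Phi> p" "q \<noteq> q'"
  shows "fst q \<^bold>\<sqinter> fst q' = \<^bold>\<bottom>"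
proof -
  have q': "q \<in> \<Phi>" "q' \<in> \<Phi>" "\<not> phi_less A q q'" "\<not> phi_less A q' q"
    using q unfolding mb_def by blast+
  show ?thesis
  proof (cases "fst q = fst q'")
    case True
    then have "snd q \<noteq> snd q'" using q(3) by (simp add: prod_eq_iff)
    then show ?thesis using True q'(3,4) unfolding phi_less_def by auto
  next
    case False
    then show ?thesis using \<Phi>_comparable[OF q'(1,2)] q'(3,4) unfolding phi_less_def by blast
  qed
qed

end

locale ape_multiset = ape_structure + preordered_multiset
begin

lemma mb_measure_sum:
  assumes t: "t \<in> Min_i A i" and p: "p \<in> \<Phi>" and w: "w \<in> carrier" "w \<preceq> t"
  shows "(\<Sum>q\<in>mb A \<Phi> p. m i (w \<^bold>\<sqinter> fst q)) = m i (w \<^bold>\<sqinter> bigjoin A (fst ` mb A \<Phi> p))"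
  using measure_meet_bigjoin[OF t w finite_mb] mb_closed mb_disjoint by blast

lemma mb_bigjoin_le:
  assumes p: "p \<in> \<Phi>"
  shows "bigjoin A (fst ` mb A \<Phi> p) \<in> carrier" "bigjoin A (fst ` mb A \<Phi> p) \<preceq> fst p"
proof -
  have S: "finite (fst ` mb A \<Phi> p)" "fst ` mb A \<Phi> p \<subseteq> carrier"
    using finite_mb[of p] mb_closed[of _ p] by blast+
  show "bigjoin A (fst ` mb A \<Phi> p) \<in> carrier" "bigjoin A (fst ` mb A \<Phi> p) \<preceq> fst p"
    using bigjoin_closed[OF S] bigjoin_least[OF S \<Phi>_closed[OF p]] mb_le[OF p] by auto
qed

lemma mu_a_mono:
  assumes t: "t \<in> Min_i A i" and p: "p \<in> \<Phi>" and C: "x \<in> carrier" "y \<in> carrier"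
    and le: "x \<preceq> y" "y \<preceq> t"
  shows "mu_a A (\<mu> i) \<Phi> p x \<le> mu_a A (\<mu> i) \<Phi> p y"
proof -
  let ?j = "bigjoin A (fst ` mb A \<Phi> p)"
  have xt: "x \<preceq> t" using le_trans[OF le] C i_minimal_closed[OF t] by simp
  have "m i (y \<^bold>\<sqinter> ?j) - m i (x \<^bold>\<sqinter> ?j) \<le> m i (y \<^bold>\<sqinter> fst p) - m i (x \<^bold>\<sqinter> fst p)"
    using measure_meet_increment_mono[OF t C _ \<Phi>_closed[OF p] le] mb_bigjoin_le[OF p] by simp
  then show ?thesis
    unfolding mu_a_def using mb_measure_sum[OF t p] C xt le by simp
qed

lemma mu_a_bottom:
  assumes t: "t \<in> Min_i A i" and p: "p \<in> \<Phi>"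
  shows "mu_a A (\<mu> i) \<Phi> p \<^bold>\<bottom> = 0"
  unfolding mu_a_def using measure_bottom[OF t] \<Phi>_closed[OF p] mb_closed by simp

lemma mu_a_modular:
  assumes t: "t \<in> Min_i A i" and p: "p \<in> \<Phi>" and C: "x \<in> carrier" "y \<in> carrier"
    and le: "x \<preceq> t" "y \<preceq> t"
  shows "mu_a A (\<mu> i) \<Phi> p (x \<^bold>\<squnion> y) = mu_a A (\<mu> i) \<Phi> p x + mu_a A (\<mu> i) \<Phi> p y - mu_a A (\<mu> i) \<Phi> p (x \<^bold>\<sqinter> y)"
proof -
  have "(\<Sum>q\<in>mb A \<Phi> p. m i ((x \<^bold>\<squnion> y) \<^bold>\<sqinter> fst q)) =
     (\<Sum>q\<in>mb A \<Phi> p. m i (x \<^bold>\<sqinter> fst q)) + (\<Sum>q\<in>mb A \<Phi> p. m i (y \<^bold>\<sqinter> fst q))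
      - (\<Sum>q\<in>mb A \<Phi> p. m i (x \<^bold>\<sqinter> y \<^bold>\<sqinter> fst q))"
    using measure_meet_modular[OF t C _ le] mb_closed by (simp add: sum.distrib sum_subtractf)
  then show ?thesis
    unfolding mu_a_def using measure_meet_modular[OF t C \<Phi>_closed[OF p] le] by simp
qed

lemma mu_a_strict_mono:
  assumes t: "t \<in> Min_i A i" and p: "p \<in> \<Phi>" and C: "x \<in> carrier" "y \<in> carrier"
    and le: "x \<preceq> y" "y \<preceq> t"
    and agree: "\<forall>q\<in>mb A \<Phi> p. x \<^bold>\<sqinter> fst q = y \<^bold>\<sqinter> fst q"
    and differ: "x \<^bold>\<sqinter> fst p \<noteq> y \<^bold>\<sqinter> fst p"
  shows "mu_a A (\<mu> i) \<Phi> p x < mu_a A (\<mu> i) \<Phi> p y"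
proof -
  have a: "fst p \<in> carrier" using \<Phi>_closed[OF p] .
  have "x \<^bold>\<sqinter> fst p \<prec> y \<^bold>\<sqinter> fst p"
    unfolding hlt_def using differ C a le meet_mono[of x y "fst p" "fst p"] by simp
  moreover have "y \<^bold>\<sqinter> fst p \<preceq> t"
    using le_trans[OF meet_le1[of y "fst p"] le(2)] C a i_minimal_closed[OF t] by simp
  ultimately have "m i (x \<^bold>\<sqinter> fst p) < m i (y \<^bold>\<sqinter> fst p)"
    using measure_strict_mono[OF t] C a by simp
  then show ?thesis
    unfolding mu_a_def using agree by simp
qed

lemma mu_a_meet_absorb:
  assumes p: "p \<in> \<Phi>" and C: "x \<in> carrier" "c \<in> carrier" and pc: "fst p \<preceq> c"
  shows "mu_a A (\<mu> i) \<Phi> p (x \<^bold>\<sqinter> c) = mu_a A (\<mu> i) \<Phi> p x"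
proof -
  have absorb: "x \<^bold>\<sqinter> c \<^bold>\<sqinter> b = x \<^bold>\<sqinter> b" if "b \<in> carrier" "b \<preceq> c" for b
    using that C le_trans[OF meet_le2[of x b] that(2)] by (intro le_antisym) (simp_all add: meet_le1I)
  have "fst q \<preceq> c" if "q \<in> mb A \<Phi> p" for q
    using le_trans[OF mb_le[OF p that] pc] mb_closed[OF that] \<Phi>_closed[OF p] C by simp
  then show ?thesis
    unfolding mu_a_def using absorb[OF \<Phi>_closed[OF p] pc] absorb mb_closed by simp
qed

end

section \<open>The updated structure\<close>

locale event_update = ape_multiset A \<mu> \<Phi> + epistemic_product A E sim
  for A :: "('a, 'i) mha" and \<mu> \<Phi> and E :: "'e set" and sim +
  fixes P :: "'i \<Rightarrow> 'e \<Rightarrow> real" and pre :: "'e \<Rightarrow> 'a \<times> nat \<Rightarrow> real"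
  assumes E_nonempty: "E \<noteq> {}"
    and P_pos: "e \<in> E \<Longrightarrow> 0 < P i e"
    and pre_nonneg: "p \<in> \<Phi> \<Longrightarrow> e \<in> E \<Longrightarrow> 0 \<le> pre e p"
    and pre_zero_mono: "p \<in> \<Phi> \<Longrightarrow> q \<in> \<Phi> \<Longrightarrow> phi_less A p q \<Longrightarrow> e \<in> E \<Longrightarrow> pre e p = 0 \<Longrightarrow> pre e q = 0"
begin

abbreviation pbar where "pbar \<equiv> prebar A E \<Phi> pre"

lemma pre_support:
  "finite {fst p | p. p \<in> \<Phi> \<and> pre e p \<noteq> 0}" "{fst p | p. p \<in> \<Phi> \<and> pre e p \<noteq> 0} \<subseteq> carrier"
proof -
  have "{fst p | p. p \<in> \<Phi> \<and> pre e p \<noteq> 0} = fst ` {p \<in> \<Phi>. pre e p \<noteq> 0}"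
    by blast
  then show "finite {fst p | p. p \<in> \<Phi> \<and> pre e p \<noteq> 0}"
    using finite_\<Phi> by simp
  show "{fst p | p. p \<in> \<Phi> \<and> pre e p \<noteq> 0} \<subseteq> carrier"
    using \<Phi>_closed by blast
qed

lemma prebar_closed: "pbar \<in> hcar A'"
  using bigjoin_closed[OF pre_support] by (simp add: inter_alg_simps prebar_def)

lemma prebar_upper:
  assumes "e \<in> E" "p \<in> \<Phi>" "pre e p \<noteq> 0"
  shows "fst p \<preceq> pbar e"
proof -
  have "fst p \<in> {fst p | p. p \<in> \<Phi> \<and> pre e p \<noteq> 0}"
    using assms by blast
  then show ?thesis
    using bigjoin_upper[OF pre_support] assms(1) by (simp add: prebar_def)
qed

lemma prebar_least:
  assumes "e \<in> E" "y \<in> carrier" "\<And>p. p \<in> \<Phi> \<Longrightarrow> pre e p \<noteq> 0 \<Longrightarrow> fst p \<preceq> y"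
  shows "pbar e \<preceq> y"
proof -
  have "\<forall>s\<in>{fst p | p. p \<in> \<Phi> \<and> pre e p \<noteq> 0}. s \<preceq> y"
    using assms(3) by blast
  then show ?thesis
    using bigjoin_least[OF pre_support assms(2)] assms(1) by (simp add: prebar_def)
qed

sublocale quot: pseudo_quotient A' pbar
  using heyting_inter_alg monadic_inter_alg epistemic_inter_alg prebar_closed
  by unfold_locales

lemma upd_alg_eq: "upd_alg A E sim \<Phi> pre = quot.Q"
  unfolding upd_alg_def ..

definition mu_prod :: "'i \<Rightarrow> ('e \<Rightarrow> 'a) \<Rightarrow> real" where
  "mu_prod i f = (\<Sum>e\<in>E. \<Sum>p\<in>\<Phi>. P i e * mu_a A (\<mu> i) \<Phi> p (f e) * pre e p)"

lemma mu_inter_eq: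
  "mu_inter A \<mu> E sim P \<Phi> pre i f = (if f \<in> Min_down A' i then Some (mu_prod i f) else None)"
  unfolding mu_inter_def mu_prod_def ..

lemma dom_mu_inter: "dom (mu_inter A \<mu> E sim P \<Phi> pre i) = Min_down A' i"
  unfolding mu_inter_eq dom_def by auto

lemma i_minimal_inter_alg_bound:
  assumes H: "H \<in> Min_i A' i" and e: "e \<in> E"
  obtains t where "t \<in> Min_i A i" "\<And>f. f \<in> hcar A' \<Longrightarrow> hle A' f H \<Longrightarrow> f e \<in> carrier \<and> f e \<preceq> t"
proof -
  obtain t where t: "t \<in> Min_i A i" "H e \<preceq> t"
    using i_minimal_inter_alg_below[OF H e] by blast
  have "f e \<in> carrier \<and> f e \<preceq> t" if "f \<in> hcar A'" "hle A' f H" for f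
    using le_trans[of "f e" "H e" t] t that A'.i_minimal_closed[OF H] i_minimal_closed[OF t(1)] e
    by (simp add: inter_alg_simps)
  with t(1) show thesis ..
qed

lemma mu_prod_term_mono:
  assumes H: "H \<in> Min_i A' i" and f: "f \<in> hcar A'" and g: "g \<in> hcar A'" "hle A' g H"
    and fg: "hle A' f g" and e: "e \<in> E" and p: "p \<in> \<Phi>"
  shows "P i e * mu_a A (\<mu> i) \<Phi> p (f e) * pre e p \<le> P i e * mu_a A (\<mu> i) \<Phi> p (g e) * pre e p"
proof -
  obtain t where t: "t \<in> Min_i A i" "g e \<in> carrier" "g e \<preceq> t"
    using i_minimal_inter_alg_bound[OF H e] g by blast
  have "mu_a A (\<mu> i) \<Phi> p (f e) \<le> mu_a A (\<mu> i) \<Phi> p (g e)"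
    using mu_a_mono[OF t(1) p _ t(2) _ t(3)] f fg e by (simp add: inter_alg_simps)
  then show ?thesis
    using P_pos[OF e, of i] pre_nonneg[OF p e] by (simp add: mult_left_mono mult_right_mono)
qed

lemma mu_prod_mono:
  assumes "H \<in> Min_i A' i" "f \<in> hcar A'" "g \<in> hcar A'" "hle A' g H" "hle A' f g"
  shows "mu_prod i f \<le> mu_prod i g"
  unfolding mu_prod_def using mu_prod_term_mono[OF assms] by (intro sum_mono) blast

lemma mu_prod_bottom:
  assumes H: "H \<in> Min_i A' i"
  shows "mu_prod i (hbot A') = 0"
proof -
  obtain e where e: "e \<in> E" using E_nonempty by blast
  obtain t where t: "t \<in> Min_i A i" using i_minimal_inter_alg_below[OF H e] by blast
  show ?thesis
    unfolding mu_prod_def inter_alg_simps using mu_a_bottom[OF t] by simp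
qed

lemma mu_prod_modular:
  assumes H: "H \<in> Min_i A' i" and f: "f \<in> hcar A'" "hle A' f H" and g: "g \<in> hcar A'" "hle A' g H"
  shows "mu_prod i (hjoin A' f g) = mu_prod i f + mu_prod i g - mu_prod i (hmeet A' f g)"
proof -
  have "P i e * mu_a A (\<mu> i) \<Phi> p (hjoin A' f g e) * pre e p =
     P i e * mu_a A (\<mu> i) \<Phi> p (f e) * pre e p + P i e * mu_a A (\<mu> i) \<Phi> p (g e) * pre e p
     - P i e * mu_a A (\<mu> i) \<Phi> p (hmeet A' f g e) * pre e p"
    if e: "e \<in> E" and p: "p \<in> \<Phi>" for e p
  proof -
    obtain t where t: "t \<in> Min_i A i" "f e \<in> carrier" "f e \<preceq> t" "g e \<in> carrier" "g e \<preceq> t"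
      using i_minimal_inter_alg_bound[OF H e] f g by metis
    note modular = mu_a_modular[OF t(1) p t(2,4,3,5)]
    show ?thesis
      using e by (simp add: inter_alg_simps modular algebra_simps)
  qed
  then show ?thesis
    unfolding mu_prod_def by (simp add: sum.distrib sum_subtractf)
qed

lemma mu_prod_meet_prebar:
  assumes f: "f \<in> hcar A'"
  shows "mu_prod i (hmeet A' f pbar) = mu_prod i f"
  unfolding mu_prod_def
proof (intro sum.cong refl)
  fix e p assume e: "e \<in> E" and p: "p \<in> \<Phi>"
  have C: "f e \<in> carrier" "pbar e \<in> carrier"
    using f prebar_closed e by (auto simp: inter_alg_simps)
  show "P i e * mu_a A (\<mu> i) \<Phi> p (hmeet A' f pbar e) * pre e p = P i e * mu_a A (\<mu> i) \<Phi> p (f e) * pre e p"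
    using mu_a_meet_absorb[OF p C prebar_upper[OF e p]] e by (cases "pre e p = 0") (simp_all add: inter_alg_simps)
qed

lemma exists_distinguishing_pre:
  assumes e: "e \<in> E" and C: "x \<in> carrier" "y \<in> carrier"
    and xy: "x \<preceq> y" "x \<noteq> y" and y: "y \<preceq> pbar e"
  shows "\<exists>p\<in>\<Phi>. pre e p \<noteq> 0 \<and> x \<^bold>\<sqinter> fst p \<noteq> y \<^bold>\<sqinter> fst p"
proof (rule ccontr)
  assume "\<not> ?thesis"
  then have agree: "x \<^bold>\<sqinter> fst p = y \<^bold>\<sqinter> fst p" if "p \<in> \<Phi>" "pre e p \<noteq> 0" for p
    using that by blast
  have "pbar e \<preceq> y \<^bold>\<rightarrow> x"
  proof (rule prebar_least[OF e])
    fix p assume p: "p \<in> \<Phi>" "pre e p \<noteq> 0"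
    have "fst p \<^bold>\<sqinter> y = x \<^bold>\<sqinter> fst p"
      using agree[OF p] meet_comm \<Phi>_closed[OF p(1)] C by simp
    then show "fst p \<preceq> y \<^bold>\<rightarrow> x"
      using le_imp_iff \<Phi>_closed[OF p(1)] C by simp
  qed (use C in simp)
  then have "y \<preceq> y \<^bold>\<rightarrow> x"
    using le_trans[OF y] prebar_closed e C by (simp add: inter_alg_simps)
  then have "y \<preceq> x"
    using le_imp_iff[of y x y] meet_absorb1[of y y] C by simp
  then show False
    using xy le_antisym C by blast
qed

text \<open>Among the distinguishing preconditions take one with fewest predecessors in \<open>\<Phi>\<close>; its
  maximal lower elements still have nonzero weight (by \<open>pre_zero_mono\<close>), so they cannot
  distinguish.\<close>

lemma exists_minimal_distinguishing_pre:
  assumes e: "e \<in> E" and ex: "\<exists>p\<in>\<Phi>. pre e p \<noteq> 0 \<and> x \<^bold>\<sqinter> fst p \<noteq> y \<^bold>\<sqinter> fst p"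
  shows "\<exists>p\<in>\<Phi>. pre e p \<noteq> 0 \<and> x \<^bold>\<sqinter> fst p \<noteq> y \<^bold>\<sqinter> fst p \<and>
    (\<forall>q\<in>mb A \<Phi> p. x \<^bold>\<sqinter> fst q = y \<^bold>\<sqinter> fst q)"
proof -
  define D where "D = {p\<in>\<Phi>. pre e p \<noteq> 0 \<and> x \<^bold>\<sqinter> fst p \<noteq> y \<^bold>\<sqinter> fst p}"
  define height where "height p = card {r\<in>\<Phi>. phi_less A r p}" for p
  obtain p0 where "p0 \<in> D" using ex unfolding D_def by blast
  then obtain p where p: "p \<in> D" "\<And>q. q \<in> D \<Longrightarrow> height p \<le> height q"
    using ex_has_least_nat[of "\<lambda>p. p \<in> D" p0 height] by blast
  have "x \<^bold>\<sqinter> fst q = y \<^bold>\<sqinter> fst q" if q: "q \<in> mb A \<Phi> p" for q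
  proof (rule ccontr)
    assume differ: "x \<^bold>\<sqinter> fst q \<noteq> y \<^bold>\<sqinter> fst q"
    have qp: "q \<in> \<Phi>" "phi_less A q p" "p \<in> \<Phi>" "pre e p \<noteq> 0"
      using q mb_subset mb_less p(1) unfolding D_def by blast+
    then have "q \<in> D"
      using pre_zero_mono[OF qp(1,3,2) e] differ unfolding D_def by blast
    moreover have "{r\<in>\<Phi>. phi_less A r q} \<subset> {r\<in>\<Phi>. phi_less A r p}"
      using phi_less_trans[OF _ qp(1,3) _ qp(2)] phi_less_irrefl[of q] qp by blast
    then have "height q < height p"
      unfolding height_def using finite_\<Phi> by (simp add: psubset_card_mono)
    ultimately show False
      using p(2) by fastforce
  qed
  then show ?thesis
    using p(1) unfolding D_def by blast
qed

lemma mu_prod_strict_mono: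
  assumes H: "H \<in> Min_i A' i" and f: "f \<in> hcar A'" and g: "g \<in> hcar A'" "hle A' g H" "hle A' g pbar"
    and fg: "hle A' f g" "f \<noteq> g"
  shows "mu_prod i f < mu_prod i g"
proof -
  have fP: "f \<in> PiE E (\<lambda>_. carrier)" and gP: "g \<in> PiE E (\<lambda>_. carrier)"
    using f g by (simp_all add: inter_alg_simps)
  obtain e where e: "e \<in> E" "f e \<noteq> g e"
    using fg(2) PiE_ext[OF fP gP] by blast
  have fe: "f e \<in> carrier" "g e \<in> carrier" "f e \<preceq> g e" "g e \<preceq> pbar e"
    using fP gP fg g e by (auto simp: inter_alg_simps)
  obtain t where t: "t \<in> Min_i A i" "g e \<preceq> t"
    using i_minimal_inter_alg_bound[OF H e(1)] g by blast
  obtain p where p: "p \<in> \<Phi>" "pre e p \<noteq> 0" "f e \<^bold>\<sqinter> fst p \<noteq> g e \<^bold>\<sqinter> fst p"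
    "\<forall>q\<in>mb A \<Phi> p. f e \<^bold>\<sqinter> fst q = g e \<^bold>\<sqinter> fst q"
    using exists_minimal_distinguishing_pre[OF e(1) exists_distinguishing_pre[OF e(1) fe(1,2,3) e(2) fe(4)]]
    by blast
  have "mu_a A (\<mu> i) \<Phi> p (f e) < mu_a A (\<mu> i) \<Phi> p (g e)"
    using mu_a_strict_mono[OF t(1) p(1) fe(1,2,3) t(2) p(4,3)] .
  moreover have "0 < P i e" "0 < pre e p"
    using P_pos[OF e(1)] pre_nonneg[OF p(1) e(1)] p(2) by auto
  ultimately have strict: "P i e * mu_a A (\<mu> i) \<Phi> p (f e) * pre e p < P i e * mu_a A (\<mu> i) \<Phi> p (g e) * pre e p"
    by simp
  note term_mono = mu_prod_term_mono[OF H f g(1,2) fg(1)]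
  have "(\<Sum>p\<in>\<Phi>. P i e * mu_a A (\<mu> i) \<Phi> p (f e) * pre e p)
      < (\<Sum>p\<in>\<Phi>. P i e * mu_a A (\<mu> i) \<Phi> p (g e) * pre e p)"
    using p(1) strict term_mono[OF e(1)] by (intro sum_strict_mono_ex1[OF finite_\<Phi>]) blast+
  then show ?thesis
    unfolding mu_prod_def using e(1) term_mono
    by (intro sum_strict_mono_ex1[OF finite_E]) (blast intro: sum_mono)+
qed

sublocale AE: epistemic_heyting quot.Q
  using quot.heyting_pquot quot.monadic_pquot quot.epistemic_pquot by unfold_locales

definition upd_val :: "'i \<Rightarrow> ('e \<Rightarrow> 'a) set \<Rightarrow> real" where
  "upd_val i X = mu_prod i (quot.canon X)"

text \<open>The representative chosen by \<open>upd_mu\<close> is irrelevant, since \<open>\<mu>'\<close> does not change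
  under meeting with \<open>pbar\<close>.\<close>

lemma mu_prod_class_member:
  assumes X: "X \<in> hcar quot.Q" and g: "g \<in> X"
  shows "mu_prod i g = upd_val i X"
proof -
  have "g \<in> hcar A'" "hmeet A' g pbar = hmeet A' (pq_rep X) pbar"
    using g quot.pquot_carrierD[OF X] unfolding pq_cls_def by auto
  then show ?thesis
    using mu_prod_meet_prebar unfolding upd_val_def quot.canon_def by metis
qed

lemma i_minimal_upd_lift:
  assumes F: "F \<in> Min_i quot.Q i"
  obtains H where "H \<in> Min_i A' i"
    and "\<And>X. X \<in> hcar quot.Q \<Longrightarrow> hle quot.Q X F \<Longrightarrow> quot.canon X \<in> Min_down A' i \<and> hle A' (quot.canon X) H"
proof -
  obtain H where H: "H \<in> Min_i A' i" "quot.canon F = hmeet A' H pbar"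
    using quot.i_minimal_pquot_lift[OF F] by blast
  have "hle A' (quot.canon X) H" if "X \<in> hcar quot.Q" "hle quot.Q X F" for X
    using A'.le_trans[of "quot.canon X" "quot.canon F" H] that AE.i_minimal_closed[OF F]
      A'.i_minimal_closed[OF H(1)] H(2) prebar_closed
    by (simp add: quot.pquot_le_iff)
  with H(1) show thesis
    by (intro that[of H]) (auto simp: Min_down_def)
qed

lemma mu_inter_some_member:
  assumes F: "F \<in> Min_i quot.Q i" and X: "X \<in> hcar quot.Q" "hle quot.Q X F"
  defines "m' \<equiv> mu_inter A \<mu> E sim P \<Phi> pre i"
  shows "the (m' (SOME g. g \<in> X \<and> g \<in> dom m')) = upd_val i X"
proof -
  have "\<exists>g. g \<in> X \<and> g \<in> dom m'"
    using quot.canon_in_class[OF X(1)] i_minimal_upd_lift[OF F] X dom_mu_inter unfolding m'_def by metis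
  then have "(SOME g. g \<in> X \<and> g \<in> dom m') \<in> X" "(SOME g. g \<in> X \<and> g \<in> dom m') \<in> Min_down A' i"
    using someI_ex[of "\<lambda>g. g \<in> X \<and> g \<in> dom m'"] dom_mu_inter unfolding m'_def by auto
  then show ?thesis
    using mu_prod_class_member[OF X(1)] mu_inter_eq unfolding m'_def by simp
qed

lemma upd_mu_below_i_minimal:
  assumes F: "F \<in> Min_i quot.Q i" and X: "X \<in> hcar quot.Q" "hle quot.Q X F"
  shows "upd_mu A \<mu> E sim P \<Phi> pre i X = Some (upd_val i X / upd_val i F)"
proof -
  have FC: "F \<in> hcar quot.Q" using AE.i_minimal_closed[OF F] .
  have X_down: "X \<in> Min_down quot.Q i" unfolding Min_down_def using X F by blast
  show ?thesis
  proof (cases "X = hbot quot.Q")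
    case True
    obtain H where "H \<in> Min_i A' i"
      using i_minimal_upd_lift[OF F] by blast
    then have "upd_val i X = 0"
      unfolding upd_val_def True using mu_prod_bottom by simp
    then show ?thesis
      unfolding upd_mu_def upd_alg_eq Let_def using X_down True by simp
  next
    case False
    then show ?thesis
      unfolding upd_mu_def upd_alg_eq Let_def
      using X_down AE.the_i_minimal_above[OF F X(1,2)] mu_inter_some_member[OF F] X FC AE.le_refl[OF FC]
      by simp
  qed
qed

lemma upd_mu_outside: "X \<notin> Min_down quot.Q i \<Longrightarrow> upd_mu A \<mu> E sim P \<Phi> pre i X = None"
  unfolding upd_mu_def upd_alg_eq Let_def by simp

context
  fixes F i assumes F: "F \<in> Min_i quot.Q i"
begin

lemma upd_val_mono:
  assumes "X \<in> hcar quot.Q" "Y \<in> hcar quot.Q" "hle quot.Q X Y" "hle quot.Q Y F"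
  shows "upd_val i X \<le> upd_val i Y"
proof -
  obtain H where H: "H \<in> Min_i A' i"
    and down: "\<And>X. X \<in> hcar quot.Q \<Longrightarrow> hle quot.Q X F \<Longrightarrow> quot.canon X \<in> Min_down A' i \<and> hle A' (quot.canon X) H"
    using i_minimal_upd_lift[OF F] by blast
  show ?thesis
    unfolding upd_val_def using mu_prod_mono[OF H] down assms
    by (simp add: quot.pquot_le_iff)
qed

lemma upd_val_strict_mono:
  assumes "X \<in> hcar quot.Q" "Y \<in> hcar quot.Q" "hlt quot.Q X Y" "hle quot.Q Y F"
  shows "upd_val i X < upd_val i Y"
proof -
  obtain H where H: "H \<in> Min_i A' i"
    and down: "\<And>X. X \<in> hcar quot.Q \<Longrightarrow> hle quot.Q X F \<Longrightarrow> quot.canon X \<in> Min_down A' i \<and> hle A' (quot.canon X) H"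
    using i_minimal_upd_lift[OF F] by blast
  have "quot.canon X \<noteq> quot.canon Y" "hle A' (quot.canon X) (quot.canon Y)"
    using assms quot.pquot_eq_iff unfolding hlt_def by (auto simp: quot.pquot_le_iff)
  then show ?thesis
    unfolding upd_val_def using mu_prod_strict_mono[OF H] down assms by simp
qed

lemma upd_val_modular:
  assumes "X \<in> hcar quot.Q" "Y \<in> hcar quot.Q" "hle quot.Q X F" "hle quot.Q Y F"
  shows "upd_val i (hjoin quot.Q X Y) = upd_val i X + upd_val i Y - upd_val i (hmeet quot.Q X Y)"
proof -
  obtain H where H: "H \<in> Min_i A' i"
    and down: "\<And>X. X \<in> hcar quot.Q \<Longrightarrow> hle quot.Q X F \<Longrightarrow> quot.canon X \<in> Min_down A' i \<and> hle A' (quot.canon X) H"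
    using i_minimal_upd_lift[OF F] by blast
  show ?thesis
    unfolding upd_val_def using mu_prod_modular[OF H] down assms by simp
qed

lemma upd_val_bottom: "upd_val i (hbot quot.Q) = 0"
proof -
  obtain H where "H \<in> Min_i A' i"
    using i_minimal_upd_lift[OF F] by blast
  then show ?thesis
    unfolding upd_val_def using mu_prod_bottom by simp
qed

lemma upd_val_pos: "0 < upd_val i F"
  using upd_val_strict_mono[of "hbot quot.Q" F] upd_val_bottom AE.i_minimalD[OF F]
  unfolding hlt_def by simp

end

lemma Min_downE:
  assumes "X \<in> Min_down quot.Q i"
  obtains F where "F \<in> Min_i quot.Q i" "X \<in> hcar quot.Q" "hle quot.Q X F"
  using assms unfolding Min_down_def by blast

lemma dom_upd_mu: "dom (upd_mu A \<mu> E sim P \<Phi> pre i) = Min_down quot.Q i"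
proof
  show "dom (upd_mu A \<mu> E sim P \<Phi> pre i) \<subseteq> Min_down quot.Q i"
  proof
    fix X assume "X \<in> dom (upd_mu A \<mu> E sim P \<Phi> pre i)"
    then show "X \<in> Min_down quot.Q i"
      using upd_mu_outside[of X i] by (cases "X \<in> Min_down quot.Q i") (auto simp: domIff)
  qed
  show "Min_down quot.Q i \<subseteq> dom (upd_mu A \<mu> E sim P \<Phi> pre i)"
    using upd_mu_below_i_minimal by (fastforce elim: Min_downE simp: domIff)
qed

lemma i_premeasure_upd_mu: "i_premeasure quot.Q i (upd_mu A \<mu> E sim P \<Phi> pre i)"
  unfolding i_premeasure_def dom_upd_mu
proof (intro conjI ballI impI)
  let ?u = "upd_mu A \<mu> E sim P \<Phi> pre i"
  fix X assume "X \<in> Min_down quot.Q i"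
  then obtain F where F: "F \<in> Min_i quot.Q i" "X \<in> hcar quot.Q" "hle quot.Q X F"
    by (rule Min_downE)
  then show "0 \<le> the (?u X)"
    using upd_mu_below_i_minimal[OF F] upd_val_mono[OF F(1), of "hbot quot.Q" X] upd_val_bottom[OF F(1)] upd_val_pos[OF F(1)]
    by simp
  fix Y assume "Y \<in> Min_down quot.Q i" "hle quot.Q X Y"
  then obtain F where F: "F \<in> Min_i quot.Q i" "Y \<in> hcar quot.Q" "hle quot.Q Y F"
    and X: "X \<in> hcar quot.Q" "hle quot.Q X Y"
    using \<open>X \<in> Min_down quot.Q i\<close> by (auto elim!: Min_downE)
  have "hle quot.Q X F"
    using AE.le_trans[OF X(2) F(3) X(1) F(2) AE.i_minimal_closed[OF F(1)]] .
  then show "the (?u X) \<le> the (?u Y)"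
    using upd_mu_below_i_minimal[OF F(1)] F X upd_val_mono[OF F(1) X(1) F(2) X(2) F(3)] upd_val_pos[OF F(1)]
    by (simp add: divide_right_mono)
next
  let ?u = "upd_mu A \<mu> E sim P \<Phi> pre i"
  fix F Y Z assume F: "F \<in> Min_i quot.Q i" and YZ: "Y \<in> hcar quot.Q" "Z \<in> hcar quot.Q"
    "hle quot.Q Y F \<and> hle quot.Q Z F"
  then have "hle quot.Q (hjoin quot.Q Y Z) F" "hle quot.Q (hmeet quot.Q Y Z) F"
    using AE.i_minimal_closed[OF F] by (auto intro: AE.meet_le1I)
  then show "the (?u (hjoin quot.Q Y Z)) = the (?u Y) + the (?u Z) - the (?u (hmeet quot.Q Y Z))"
    using upd_mu_below_i_minimal[OF F] YZ upd_val_modular[OF F YZ(1,2)]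
    by (simp add: add_divide_distrib diff_divide_distrib)
next
  let ?u = "upd_mu A \<mu> E sim P \<Phi> pre i"
  assume "Min_down quot.Q i \<noteq> {}"
  then obtain F where F: "F \<in> Min_i quot.Q i"
    by (auto elim: Min_downE)
  then show "?u (hbot quot.Q) = Some 0"
    using upd_mu_below_i_minimal[OF F] upd_val_bottom[OF F] AE.i_minimal_closed[OF F] by simp
qed simp

lemma i_measure_upd_mu: "i_measure quot.Q i (upd_mu A \<mu> E sim P \<Phi> pre i)"
  unfolding i_measure_def
proof (intro conjI ballI impI i_premeasure_upd_mu)
  let ?u = "upd_mu A \<mu> E sim P \<Phi> pre i"
  fix F Y Z assume F: "F \<in> Min_i quot.Q i" and YZ: "Y \<in> hcar quot.Q" "Z \<in> hcar quot.Q"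
    "hlt quot.Q Y Z \<and> hle quot.Q Z F"
  then have "hle quot.Q Y F"
    using AE.le_trans[of Y Z F] AE.i_minimal_closed[OF F] unfolding hlt_def by blast
  then show "the (?u Y) < the (?u Z)"
    using upd_mu_below_i_minimal[OF F] YZ upd_val_strict_mono[OF F YZ(1,2)] upd_val_pos[OF F]
    by (simp add: divide_strict_right_mono)
next
  fix F assume F: "F \<in> Min_i quot.Q i"
  then show "upd_mu A \<mu> E sim P \<Phi> pre i F = Some 1"
    using upd_mu_below_i_minimal[OF F AE.i_minimal_closed[OF F] AE.le_refl[OF AE.i_minimal_closed[OF F]]]
      upd_val_pos[OF F] by simp
qed

end

lemma event_update_intro:
  assumes ape: "APE_structure A \<mu>" and pes: "prob_event_structure A E sim P \<Phi> pre"
  shows "event_update A \<mu> \<Phi> E sim P pre"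
proof -
  have epistemic: "epistemic_heyting_algebra A" and measures: "\<And>i. i_measure A i (\<mu> i)"
    using ape unfolding APE_structure_def by blast+
  have monadic: "monadic_heyting_algebra A" and heyting: "heyting_algebra A"
    using epistemic unfolding epistemic_heyting_algebra_def monadic_heyting_algebra_def by blast+
  note pes' = pes[unfolded prob_event_structure_def]
  show ?thesis
  proof unfold_locales
    show "finite \<Phi>" "finite E" "E \<noteq> {}"
      using pes' by blast+
    show "fst p \<in> hcar A" if "p \<in> \<Phi>" for p
      using pes' that by blast
    show "hmeet A (fst p) (fst q) = hbot A \<or> hlt A (fst p) (fst q) \<or> hlt A (fst q) (fst p)"
      if "p \<in> \<Phi>" "q \<in> \<Phi>" "fst p \<noteq> fst q" for p q
      using pes' that by blast
    show "sim i e e" if "e \<in> E" for i e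
      using pes' that by blast
    show "sim i e' e" if "e \<in> E" "e' \<in> E" "sim i e e'" for i e e'
      using pes' that by blast
    show "sim i e e''" if "e \<in> E" "e' \<in> E" "e'' \<in> E" "sim i e e'" "sim i e' e''" for i e e' e''
      using pes' that by blast
    show "0 < P i e" if "e \<in> E" for i e
      using pes' that by blast
    show "0 \<le> pre e p" if "p \<in> \<Phi>" "e \<in> E" for p e
      using pes' that by blast
    show "pre e q = 0" if "p \<in> \<Phi>" "q \<in> \<Phi>" "phi_less A p q" "e \<in> E" "pre e p = 0" for p q e
      using pes' that by blast
  qed (fact heyting monadic epistemic measures)+
qed

theorem proposition10:
  fixes A :: "('a, 'i) mha" and \<mu> :: "'i \<Rightarrow> 'a \<Rightarrow> real option"
    and E :: "'e set" and sim :: "'i \<Rightarrow> 'e \<Rightarrow> 'e \<Rightarrow> bool" and P :: "'i \<Rightarrow> 'e \<Rightarrow> real"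
    and \<Phi> :: "('a \<times> nat) set" and pre :: "'e \<Rightarrow> ('a \<times> nat) \<Rightarrow> real"
  assumes "APE_structure A \<mu>"
    and "prob_event_structure A E sim P \<Phi> pre"
  shows "APE_structure (upd_alg A E sim \<Phi> pre) (upd_mu A \<mu> E sim P \<Phi> pre)"
proof -
  interpret event_update A \<mu> \<Phi> E sim P pre
    using event_update_intro[OF assms] .
  show ?thesis
    unfolding APE_structure_def upd_alg_eq
    using quot.epistemic_pquot i_measure_upd_mu by blast
qed

end
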